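(* Let $r\ge1$ and $\lambda^1,\dots,\lambda^r$ be partitions with all parts $\ge2$. In $\mathbb{C}[S_n]$, $$\prod_{j=1}^r\Sigma_{\lambda^j}=\Sigma_{\lambda^1\cup\dots\cup\lambda^r}+R,\qquad R=\sum_\mu r_\mu(n)\,\Sigma_\mu,$$ where $r_\mu(n)=O(n^\beta)$ as $n\to\infty$ with $\beta=\frac{l(\mu)+|\vec\lambda|+\ell(\vec\lambda)}{2}-|\mu|-1$, and $r_\mu(n)=0$ whenever either $l(\mu)>l(\vec\lambda)$, or $l(\mu)=l(\vec\lambda)$ and $\ell(\mu)\ge\ell(\vec\lambda)$.
   Context: For a partition $\lambda$ with parts $\ge2$ and $|\lambda|\le n$, $\Sigma_\lambda=\Sigma_{\lambda,n}=\sum(a_{1,1}\cdots a_{1,\lambda_1})\cdots(a_{\ell,1}\cdots a_{\ell,\lambda_\ell})$ over all choices of pairwise distinct $a_{p,q}\in\{1,\dots,n\}$ ($\Sigma_\emptyset=e$); these elements form a basis of the center of $\mathbb{C}[S_n]$, and the sum defining $R$ runs over partitions $\mu$ with parts $\ge2$. $|\lambda|$, $\ell(\lambda)$ are size and number of parts, $l(\lambda)=|\lambda|-\ell(\lambda)$; $|\vec\lambda|=\sum_j|\lambda^j|$, $\ell(\vec\lambda)=\sum_j\ell(\lambda^j)$, $l(\vec\lambda)=\sum_jl(\lambda^j)$; $\lambda^1\cup\dots\cup\lambda^r$ is the partition with the union of the multisets of parts. *)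

theory Defs
  imports "HOL-Analysis.Analysis" "HOL-Library.Multiset" "HOL-Library.Landau_Symbols"
    "HOL-Combinatorics.Cycles"
begin

text \<open>Partitions are finite multisets of natural numbers (their parts).
  We only use partitions all of whose parts are at least 2.\<close>

definition parts_ge2 :: "nat multiset \<Rightarrow> bool" where
  "parts_ge2 lam \<longleftrightarrow> (\<forall>k \<in># lam. 2 \<le> k)"

definition psize :: "nat multiset \<Rightarrow> nat" where
  "psize lam = sum_mset lam"

definition plen :: "nat multiset \<Rightarrow> nat" where
  "plen lam = size lam"

definition pl :: "nat multiset \<Rightarrow> nat" where
  "pl lam = psize lam - plen lam"

text \<open>Elements of the group algebra C[S_n]: complex-valued functions on
  maps nat => nat, meant to be supported on the permutations of {1..n}.\<close>

type_synonym galg = "(nat \<Rightarrow> nat) \<Rightarrow> complex"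

definition gunit :: galg where
  "gunit = (\<lambda>\<sigma>. if \<sigma> = id then 1 else 0)"

definition gmult :: "nat \<Rightarrow> galg \<Rightarrow> galg \<Rightarrow> galg" where
  "gmult n x y = (\<lambda>\<sigma>. \<Sum>\<tau> \<in> {\<tau>. \<tau> permutes {1..n}}. x \<tau> * y (inv \<tau> \<circ> \<sigma>))"

text \<open>Sigma_{lambda,n}: sum of products of disjoint cycles
  (a_{1,1} ... a_{1,lambda_1}) ... over pairwise distinct entries in {1..n}.
  A choice of the a_{p,q} is a list of lists whose lengths are the parts.\<close>

definition cycprod :: "nat list list \<Rightarrow> nat \<Rightarrow> nat" where
  "cycprod cs = foldr (\<lambda>c f. cycle_of_list c \<circ> f) cs id"

definition Sig :: "nat \<Rightarrow> nat multiset \<Rightarrow> galg" where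
  "Sig n lam = (\<lambda>\<sigma>. of_nat (card {cs :: nat list list.
       map length cs = sorted_list_of_multiset lam \<and> distinct (concat cs) \<and>
       set (concat cs) \<subseteq> {1..n} \<and> cycprod cs = \<sigma>}))"

definition gprod :: "nat \<Rightarrow> galg list \<Rightarrow> galg" where
  "gprod n xs = foldr (gmult n) xs gunit"

end

theory Submission
  imports Defs "HOL-Combinatorics.Orbits"
begin

text \<open>
  Write \<open>\<lambda>\<close> for the family \<open>\<lambda>\<^sup>1, \<dots>, \<lambda>\<^sup>r\<close>. Expanding the product, its value at \<open>\<sigma>\<close>
  counts the tuples of cycle lists, the \<open>j\<close>-th consisting of disjoint cycles of shape
  \<open>\<lambda>\<^sup>j\<close>, whose product is \<open>\<sigma>\<close>. The tuples without repeated entries are exactly the terms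
  of \<open>\<Sigma>\<close> for the union of the \<open>\<lambda>\<^sup>j\<close>. The number of the remaining, overlapping, tuples is a
  class function of \<open>\<sigma>\<close>, hence a combination of the \<open>\<Sigma>\<^sub>\<mu>\<close>, whose coefficients are read
  off at one fixed permutation of each cycle type \<open>\<mu>\<close>.

  For an overlapping tuple with set of entries \<open>U\<close> and product of type \<open>\<mu>\<close>, the product
  has \<open>\<ell>(\<mu>) + |U| - |\<mu>|\<close> orbits on \<open>U\<close>. Building it one transposition at a time, this
  number is at least \<open>|U| - l(\<lambda>)\<close> and, since some cycles overlap, at most
  \<open>l(\<lambda>) + 2(\<ell>(\<lambda>) - 1) - |U|\<close>. The first bound gives \<open>l(\<mu>) \<le> l(\<lambda>)\<close>; the second gives
  \<open>|U| - |\<mu>| \<le> \<beta>\<close> and, when \<open>l(\<mu>) = l(\<lambda>)\<close>, also \<open>\<ell>(\<mu>) < \<ell>(\<lambda>)\<close>. Since the entries of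
  \<open>U\<close> outside the support of the fixed permutation can be chosen in \<open>O(n\<^sup>\<beta>)\<close> ways, the
  coefficients are \<open>O(n\<^sup>\<beta>)\<close>.
\<close>

lemma cycprod_Nil [simp]: "cycprod [] = id"
  by (simp add: cycprod_def)

lemma cycprod_Cons [simp]: "cycprod (c # cs) = cycle_of_list c \<circ> cycprod cs"
  by (simp add: cycprod_def)

lemma cycprod_append: "cycprod (xs @ ys) = cycprod xs \<circ> cycprod ys"
  by (induction xs) auto

lemma cycprod_permutes: "cycprod cs permutes set (concat cs)"
proof (induction cs)
  case (Cons c cs)
  have "cycle_of_list c permutes set (concat (c # cs))"
    by (rule permutes_subset[OF cycle_permutes]) auto
  moreover have "cycprod cs permutes set (concat (c # cs))"
    by (rule permutes_subset[OF Cons.IH]) auto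
  ultimately show ?case
    unfolding cycprod_Cons by (rule permutes_compose[rotated])
qed (simp add: permutes_id flip: id_def)

lemma cycprod_permutes_superset: "set (concat cs) \<subseteq> S \<Longrightarrow> cycprod cs permutes S"
  by (rule permutes_subset[OF cycprod_permutes])

lemma cycprod_fixes: "x \<notin> set (concat cs) \<Longrightarrow> cycprod cs x = x"
  using cycprod_permutes permutes_not_in by fast

lemma cycle_of_list_in_set: "x \<in> set c \<Longrightarrow> cycle_of_list c x \<in> set c"
  by (metis cycle_permutes permutes_in_image)

lemma cycprod_eq_cycle_of_list:
  assumes "distinct (concat cs)" "c \<in> set cs" "x \<in> set c"
  shows "cycprod cs x = cycle_of_list c x"
  using assms
proof (induction cs)
  case (Cons d cs)
  show ?case
  proof (cases "c = d")
    case True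
    then have "x \<notin> set (concat cs)"
      using Cons.prems by auto
    then show ?thesis
      using True by (simp add: cycprod_fixes)
  next
    case False
    then have c: "c \<in> set cs"
      using Cons.prems by auto
    then have "cycle_of_list c x \<in> set (concat cs)"
      using Cons.prems(3) cycle_of_list_in_set by fastforce
    then have "cycle_of_list c x \<notin> set d"
      using Cons.prems(1) by auto
    then show ?thesis
      using Cons c by (simp add: id_outside_supp)
  qed
qed simp

lemma cycprod_conjugate:
  assumes "\<forall>c\<in>set cs. distinct c" "bij p"
  shows "cycprod (map (map p) cs) = p \<circ> cycprod cs \<circ> inv p"
  using assms
proof (induction cs)
  case Nil
  then show ?case
    by (auto simp: fun_eq_iff bij_is_surj surj_f_inv_f)
next
  case (Cons c cs)
  then have "cycprod (map (map p) (c # cs)) = (p \<circ> cycle_of_list c \<circ> inv p) \<circ> (p \<circ> cycprod cs \<circ> inv p)"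
    using conjugation_of_cycle[of c p] by (simp add: fun_eq_iff)
  then show ?case
    using bij_is_inj[OF assms(2)] by (auto simp: fun_eq_iff)
qed

lemma cycprod_filter_short: "cycprod (filter (\<lambda>c. 2 \<le> length c) cs) = cycprod cs"
proof (induction cs)
  case (Cons c cs)
  have "cycle_of_list c = id" if "length c < 2"
    using that by (cases c rule: cycle_of_list.cases) auto
  with Cons show ?case
    by (cases "2 \<le> length c") auto
qed simp

lemma mset_concat_permute_list:
  "p permutes {..<length xss} \<Longrightarrow> mset (concat (permute_list p xss)) = mset (concat xss)"
proof -
  have "mset (concat xs) = sum_mset (image_mset mset (mset xs))" for xs :: "'a list list"
    by (induction xs) auto
  then show "p permutes {..<length xss} \<Longrightarrow> ?thesis"
    by simp
qed

lemma cycprod_permute_list: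
  assumes d: "distinct (concat cs)" and p: "p permutes {..<length cs}"
  shows "cycprod (permute_list p cs) = cycprod cs"
proof
  fix x
  let ?cs = "permute_list p cs"
  have m: "mset (concat ?cs) = mset (concat cs)"
    using p by (rule mset_concat_permute_list)
  then have d': "distinct (concat ?cs)"
    using d mset_eq_imp_distinct_iff by blast
  show "cycprod ?cs x = cycprod cs x"
  proof (cases "x \<in> set (concat cs)")
    case True
    then obtain c where c: "c \<in> set cs" "x \<in> set c"
      by auto
    then have "c \<in> set ?cs"
      using p by simp
    then show ?thesis
      using cycprod_eq_cycle_of_list[OF d c] cycprod_eq_cycle_of_list[OF d' _ c(2)] by simp
  next
    case False
    then show ?thesis
      using m cycprod_fixes mset_eq_setD by metis
  qed
qed

lemma orbit_cycle_of_list: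
  assumes "distinct c" "x \<in> set c"
  shows "orbit (cycle_of_list c) x = set c"
proof -
  let ?f = "cycle_of_list c"
  obtain i where i: "i < length c" "c ! i = x"
    by (meson assms(2) in_set_conv_nth)
  have pow: "(?f ^^ k) x = c ! ((k + i) mod length c)" for k
    using cyclic_rotation[OF assms(1), of k] i nth_rotate[OF i(1), of k]
    by (metis nth_map)
  have "orbit ?f x = {(?f ^^ k) x | k. True}"
    by (rule orbit_altdef_permutation[OF permutation_of_cycle])
  also have "\<dots> = set c"
  proof (intro equalityI subsetI)
    fix y assume "y \<in> {(?f ^^ k) x | k. True}"
    then show "y \<in> set c"
      using pow i(1) by (auto intro!: nth_mem mod_less_divisor)
  next
    fix y assume "y \<in> set c"
    then obtain j where "j < length c" "c ! j = y"
      by (meson in_set_conv_nth)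
    then have "(?f ^^ (j + length c - i)) x = y"
      using pow i(1) by simp
    then show "y \<in> {(?f ^^ k) x | k. True}"
      by blast
  qed
  finally show ?thesis .
qed

lemma cycle_of_list_moves:
  assumes "distinct c" "2 \<le> length c" "x \<in> set c"
  shows "cycle_of_list c x \<noteq> x"
proof
  assume "cycle_of_list c x = x"
  then have "set c = {x}"
    using orbit_cycle_of_list[OF assms(1,3)] orbit_eq_singleton_iff by metis
  then show False
    using assms(1,2) distinct_card by fastforce
qed

lemma orbit_cycprod:
  assumes "distinct (concat cs)" "c \<in> set cs" "x \<in> set c"
  shows "orbit (cycprod cs) x = set c"
proof -
  have "orbit (cycprod cs) x = orbit (cycle_of_list c) x"
    using cycprod_eq_cycle_of_list[OF assms(1,2)] cycle_of_list_in_set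
    by (intro orbit_cong0[OF assms(3)]) auto
  also have "\<dots> = set c"
    using assms by (intro orbit_cycle_of_list) (auto simp: distinct_concat_iff)
  finally show ?thesis .
qed


section \<open>Counting orbits\<close>

definition num_orbits :: "'a set \<Rightarrow> ('a \<Rightarrow> 'a) \<Rightarrow> nat" where
  "num_orbits S f = card (orbit f ` S)"

lemma orbit_eq_of_mem: "permutation f \<Longrightarrow> y \<in> orbit f x \<Longrightarrow> orbit f y = orbit f x"
  by (metis cyclic_on_orbit' orbit_cyclic_eq3)

lemma orbit_subset_invariant:
  assumes "x \<in> A" "\<And>y. y \<in> A \<Longrightarrow> f y \<in> A"
  shows "orbit f x \<subseteq> A"
proof
  fix y assume "y \<in> orbit f x"
  then show "y \<in> A"
    by induction (use assms in auto)
qed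

lemma num_orbits_id: "num_orbits S id = card S"
proof -
  have "orbit id ` S = (\<lambda>x. {x}) ` S"
    by (auto simp: orbit_eq_singleton_iff[THEN iffD2])
  then show ?thesis
    unfolding num_orbits_def by (simp add: card_image)
qed

lemma distinct_map_set:
  assumes "distinct (concat cs)" "\<forall>c\<in>set cs. c \<noteq> []"
  shows "distinct (map set cs)"
  using assms
proof (induction cs)
  case (Cons c cs)
  have "set c \<notin> set ` set cs"
  proof
    assume "set c \<in> set ` set cs"
    moreover obtain y where "y \<in> set c"
      using Cons.prems(2) by (metis last_in_set list.set_intros(1))
    ultimately show False
      using Cons.prems(1) by auto
  qed
  then show ?case
    using Cons by simp
qed simp

lemma num_orbits_cycprod_disjoint:
  assumes "distinct (concat cs)" "\<forall>c\<in>set cs. c \<noteq> []" "set (concat cs) \<subseteq> S" "finite S"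
  shows "num_orbits S (cycprod cs) = length cs + card (S - set (concat cs))"
proof -
  let ?U = "set (concat cs)"
  have "orbit (cycprod cs) ` S = set ` set cs \<union> (\<lambda>x. {x}) ` (S - ?U)"
  proof (intro equalityI subsetI)
    fix X assume "X \<in> orbit (cycprod cs) ` S"
    then obtain x where x: "x \<in> S" "X = orbit (cycprod cs) x"
      by blast
    show "X \<in> set ` set cs \<union> (\<lambda>x. {x}) ` (S - ?U)"
    proof (cases "x \<in> ?U")
      case True
      then show ?thesis
        using x orbit_cycprod[OF assms(1)] by auto
    next
      case False
      then show ?thesis
        using x cycprod_fixes orbit_eq_singleton_iff by (metis Diff_iff UnI2 image_eqI)
    qed
  next
    fix X assume "X \<in> set ` set cs \<union> (\<lambda>x. {x}) ` (S - ?U)"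
    then show "X \<in> orbit (cycprod cs) ` S"
    proof
      assume "X \<in> set ` set cs"
      then obtain c x where "c \<in> set cs" "X = set c" "x \<in> set c"
        using assms(2) by (metis image_iff last_in_set)
      then show ?thesis
        using orbit_cycprod[OF assms(1)] assms(3) by (metis UN_I image_eqI set_concat subsetD)
    next
      assume "X \<in> (\<lambda>x. {x}) ` (S - ?U)"
      then obtain x where "x \<in> S" "x \<notin> ?U" "X = {x}"
        by auto
      then show ?thesis
        using cycprod_fixes orbit_eq_singleton_iff by (metis image_eqI)
    qed
  qed
  moreover have "set ` set cs \<inter> (\<lambda>x. {x}) ` (S - ?U) = {}"
    using assms(2) by fastforce
  moreover have "card (set ` set cs) = length cs"
    using distinct_card[OF distinct_map_set[OF assms(1,2)]] by simp
  ultimately show ?thesis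
    unfolding num_orbits_def using assms(4) by (simp add: card_Un_disjoint card_image)
qed

lemma orbit_transpose_comp_eq:
  assumes "permutation f" "a \<notin> orbit f x" "b \<notin> orbit f x"
  shows "orbit (Transposition.transpose a b \<circ> f) x = orbit f x"
proof (rule orbit_cong[OF permutation_self_in_orbit[OF assms(1)]])
  fix s assume "s \<in> orbit f x"
  then have "f s \<in> orbit f x"
    by (rule orbit.step)
  then have "f s \<noteq> a" "f s \<noteq> b"
    using assms(2,3) by auto
  then show "(Transposition.transpose a b \<circ> f) s = f s"
    by simp
qed

lemma num_orbits_le_transpose_comp:
  assumes p: "f permutes S" and fin: "finite S" and a: "a \<in> S" and b: "b \<in> S"
  shows "num_orbits S f \<le> num_orbits S (Transposition.transpose a b \<circ> f) + 1"
proof -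
  define g where "g = Transposition.transpose a b \<circ> f"
  have pf: "permutation f"
    using p fin permutation_permutes by blast
  have pg: "permutation g"
    unfolding g_def by (rule permutation_compose[OF permutation_swap_id pf])
  define Q where "Q = orbit f ` S - {orbit f a, orbit f b}"
  have finQ: "finite Q"
    using fin unfolding Q_def by simp
  have "Q \<subseteq> orbit g ` S"
  proof
    fix X assume "X \<in> Q"
    then obtain x where x: "x \<in> S" "X = orbit f x" "X \<noteq> orbit f a" "X \<noteq> orbit f b"
      unfolding Q_def by auto
    then have "a \<notin> orbit f x" "b \<notin> orbit f x"
      using orbit_eq_of_mem[OF pf] by metis+
    then have "orbit g x = X"
      using orbit_transpose_comp_eq[OF pf] x(2) unfolding g_def by simp
    then show "X \<in> orbit g ` S"
      using x(1) by blast
  qed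
  moreover have "orbit g a \<notin> Q"
  proof
    assume "orbit g a \<in> Q"
    then obtain x where "orbit g a = orbit f x" "orbit f x \<noteq> orbit f a"
      unfolding Q_def by auto
    then show False
      using permutation_self_in_orbit[OF pg, of a] orbit_eq_of_mem[OF pf] by metis
  qed
  ultimately have "card (insert (orbit g a) Q) \<le> num_orbits S g"
    unfolding num_orbits_def using a fin by (intro card_mono) auto
  then have "card Q + 1 \<le> num_orbits S g"
    using \<open>orbit g a \<notin> Q\<close> finQ by simp
  moreover have "num_orbits S f \<le> card Q + 2"
  proof -
    have "orbit f ` S \<subseteq> Q \<union> {orbit f a, orbit f b}"
      unfolding Q_def by auto
    then have "num_orbits S f \<le> card (Q \<union> {orbit f a, orbit f b})"
      unfolding num_orbits_def using finQ by (intro card_mono) auto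
    also have "\<dots> \<le> card Q + card {orbit f a, orbit f b}"
      by (rule card_Un_le)
    also have "\<dots> \<le> card Q + 2"
      by (simp add: card_insert_if)
    finally show ?thesis .
  qed
  ultimately show ?thesis
    unfolding g_def by linarith
qed

lemma num_orbits_transpose_comp_le:
  assumes "f permutes S" "finite S" "a \<in> S" "b \<in> S"
  shows "num_orbits S (Transposition.transpose a b \<circ> f) \<le> num_orbits S f + 1"
  using num_orbits_le_transpose_comp[OF permutes_compose[OF assms(1) permutes_swap_id[OF assms(3,4)]] assms(2-4)]
  by (simp add: comp_assoc[symmetric])

lemma orbit_subset_orbit_transpose_comp:
  assumes f: "permutation f" and b: "b \<notin> orbit f a"
  shows "orbit f a \<subseteq> orbit (Transposition.transpose a b \<circ> f) a"
proof
  let ?g = "Transposition.transpose a b \<circ> f"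
  have f_step: "f y \<in> orbit ?g a" if "y \<in> insert a (orbit ?g a)" "f y \<in> orbit f a" for y
  proof (cases "f y = a")
    case True
    then show ?thesis
      using permutation_self_in_orbit[OF permutation_compose[OF permutation_swap_id f]] by simp
  next
    case False
    moreover have "f y \<noteq> b"
      using that(2) b by auto
    ultimately have "?g y = f y"
      by simp
    moreover have "?g y \<in> orbit ?g a"
      using that(1) orbit.base[of ?g a] orbit.step[of y ?g a] by blast
    ultimately show ?thesis
      by simp
  qed
  fix z assume "z \<in> orbit f a"
  then show "z \<in> orbit ?g a"
  proof induction
    case base
    then show ?case
      using f_step[of a] orbit.base[of f a] by blast
  next
    case (step y)
    then show ?case
      using f_step[of y] orbit.step[of y f a] by blast
  qed
qed

lemma orbit_transpose_comp_merge:
  assumes pf: "permutation f" and ab: "b \<notin> orbit f a"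
  shows "orbit (Transposition.transpose a b \<circ> f) a = orbit f a \<union> orbit f b"
proof -
  define g where "g = Transposition.transpose a b \<circ> f"
  let ?Oa = "orbit f a" and ?Ob = "orbit f b"
  have aOa: "a \<in> ?Oa" and bOb: "b \<in> ?Ob"
    using permutation_self_in_orbit[OF pf] by auto
  have ba: "a \<notin> ?Ob"
    using ab aOa bOb orbit_eq_of_mem[OF pf] by metis
  have "?Oa \<subseteq> orbit g a"
    unfolding g_def by (rule orbit_subset_orbit_transpose_comp[OF pf ab])
  moreover have "?Ob \<subseteq> orbit g b"
    using orbit_subset_orbit_transpose_comp[OF pf ba] unfolding g_def by (simp add: transpose_commute)
  moreover have "b \<in> orbit g a"
  proof -
    have "inv f a \<in> ?Oa"
      using orbit_inv_eq[OF pf] orbit.base[of "inv f" a] by (metis bij_inv_eq_iff permutation_bijective pf)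
    moreover have "g (inv f a) = b"
      using pf unfolding g_def by (simp add: permutation_bijective bij_is_surj surj_f_inv_f)
    ultimately show ?thesis
      using \<open>?Oa \<subseteq> orbit g a\<close> by (metis orbit.step subsetD)
  qed
  then have "orbit g b = orbit g a"
    using orbit_eq_of_mem[OF permutation_compose[OF permutation_swap_id pf]] unfolding g_def by blast
  moreover have "orbit g a \<subseteq> ?Oa \<union> ?Ob"
    using aOa bOb orbit.step[of _ f] unfolding g_def
    by (intro orbit_subset_invariant) (auto simp: Transposition.transpose_def)
  ultimately show ?thesis
    unfolding g_def by auto
qed

lemma num_orbits_transpose_comp_merge:
  assumes p: "f permutes S" and fin: "finite S" and a: "a \<in> S" and b: "b \<in> S"
    and ab: "b \<notin> orbit f a"
  shows "num_orbits S (Transposition.transpose a b \<circ> f) + 1 \<le> num_orbits S f"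
proof -
  define g where "g = Transposition.transpose a b \<circ> f"
  have pf: "permutation f" and pg: "permutation g"
    using p fin permutes_compose[OF p permutes_swap_id[OF a b]]
    unfolding g_def permutation_permutes by blast+
  let ?Oa = "orbit f a" and ?Ob = "orbit f b"
  have merged: "orbit g a = ?Oa \<union> ?Ob"
    unfolding g_def by (rule orbit_transpose_comp_merge[OF pf ab])
  have aOa: "a \<in> ?Oa" and ba: "a \<notin> ?Ob"
    using permutation_self_in_orbit[OF pf] ab orbit_eq_of_mem[OF pf] by metis+
  define Q where "Q = orbit f ` S"
  have "orbit g ` S \<subseteq> insert (orbit g a) (Q - {?Oa, ?Ob})"
  proof
    fix X assume "X \<in> orbit g ` S"
    then obtain x where x: "x \<in> S" "X = orbit g x"
      by blast
    show "X \<in> insert (orbit g a) (Q - {?Oa, ?Ob})"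
    proof (cases "x \<in> ?Oa \<union> ?Ob")
      case True
      then have "orbit g x = orbit g a"
        using merged orbit_eq_of_mem[OF pg] by blast
      then show ?thesis
        using x by simp
    next
      case False
      then have "a \<notin> orbit f x" "b \<notin> orbit f x" "orbit f x \<noteq> ?Oa" "orbit f x \<noteq> ?Ob"
        using orbit_eq_of_mem[OF pf] permutation_self_in_orbit[OF pf, of x] by blast+
      then show ?thesis
        using orbit_transpose_comp_eq[OF pf] x unfolding g_def Q_def by auto
    qed
  qed
  moreover have "?Oa \<in> Q" "?Ob \<in> Q" "?Oa \<noteq> ?Ob" and finQ: "finite Q"
    using a b aOa ba fin unfolding Q_def by auto
  ultimately have "num_orbits S g \<le> card (insert (orbit g a) (Q - {?Oa, ?Ob}))"
    and "card (Q - {?Oa, ?Ob}) = card Q - 2" and "2 \<le> card Q"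
    unfolding num_orbits_def using card_mono[OF finQ, of "{?Oa, ?Ob}"]
    by (auto intro: card_mono simp: card_Diff_subset finQ)
  moreover have "card (insert (orbit g a) (Q - {?Oa, ?Ob})) \<le> card (Q - {?Oa, ?Ob}) + 1"
    using finQ by (simp add: card_insert_if)
  ultimately show ?thesis
    unfolding num_orbits_def Q_def g_def by linarith
qed

lemma num_orbits_transpose_comp_fixpoint:
  assumes "f permutes S" "finite S" "i \<in> S" "j \<in> S" "i \<noteq> j"
  shows "num_orbits S (Transposition.transpose i j \<circ> f) + 2 * of_bool (f i = i) \<le> num_orbits S f + 1"
proof (cases "f i = i")
  case True
  then have "orbit f i = {i}"
    by (simp add: orbit_eq_singleton_iff)
  then have "j \<notin> orbit f i"
    using assms(5) by simp
  then show ?thesis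
    using num_orbits_transpose_comp_merge[OF assms(1-4)] True by simp
next
  case False
  then show ?thesis
    using num_orbits_transpose_comp_le[OF assms(1-4)] by simp
qed

section \<open>Orbit counts of products of cycles\<close>

lemma num_orbits_cycle_comp_ge:
  assumes "f permutes S" "finite S" "set c \<subseteq> S"
  shows "num_orbits S f \<le> num_orbits S (cycle_of_list c \<circ> f) + (length c - 1)"
  using assms
proof (induction c arbitrary: f rule: cycle_of_list.induct)
  case (1 i j cs)
  define r where "r = cycle_of_list (j # cs) \<circ> f"
  have eq: "cycle_of_list (i # j # cs) \<circ> f = Transposition.transpose i j \<circ> r"
    unfolding r_def by (simp add: comp_assoc)
  have "r permutes S"
    unfolding r_def using 1 by (intro permutes_compose permutes_subset[OF cycle_permutes]) auto
  then have "num_orbits S r \<le> num_orbits S (Transposition.transpose i j \<circ> r) + 1"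
    using 1 by (intro num_orbits_le_transpose_comp) auto
  moreover have "num_orbits S f \<le> num_orbits S r + (length (j # cs) - 1)"
    unfolding r_def using 1 by (simp add: comp_def)
  moreover have "length (i # j # cs) - 1 = (length (j # cs) - 1) + 1"
    by simp
  ultimately show ?case
    unfolding eq by linarith
qed auto

text \<open>Writing the cycle \<open>(i j \<dots>)\<close> as \<open>(i j) \<circ> (j \<dots>)\<close>: if \<open>i\<close> is not moved by \<open>f\<close>,
  the transposition merges the fixed point \<open>i\<close> into another orbit. Rotating \<open>c\<close> so that
  its last entry lies in \<open>V\<close> guarantees that this happens for every entry outside \<open>V\<close>.\<close>

lemma num_orbits_cycle_comp_le:
  assumes "f permutes S" "finite S" "set c \<subseteq> S" "distinct c"
    and "\<And>x. x \<notin> V \<Longrightarrow> f x = x"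
    and "set c \<inter> V \<noteq> {} \<Longrightarrow> last c \<in> V"
  shows "num_orbits S (cycle_of_list c \<circ> f) + 2 * card (set c - V)
          \<le> num_orbits S f + (length c - 1) + 2 * of_bool (set c \<inter> V = {})"
  using assms
proof (induction c arbitrary: f rule: cycle_of_list.induct)
  case (1 i j cs)
  define r where "r = cycle_of_list (j # cs) \<circ> f"
  have rp: "r permutes S"
    unfolding r_def using 1 by (intro permutes_compose permutes_subset[OF cycle_permutes]) auto
  have eq: "cycle_of_list (i # j # cs) \<circ> f = Transposition.transpose i j \<circ> r"
    unfolding r_def by (simp add: comp_assoc)
  have i: "i \<in> S" "i \<notin> set (j # cs)" and j: "j \<in> S"
    using 1(4,5) by auto
  have last: "set (j # cs) \<inter> V \<noteq> {} \<Longrightarrow> last (j # cs) \<in> V"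
    using 1(7) by auto
  then have ih: "num_orbits S r + 2 * card (set (j # cs) - V)
      \<le> num_orbits S f + (length (j # cs) - 1) + 2 * of_bool (set (j # cs) \<inter> V = {})"
    unfolding r_def using 1(2-6) by (intro 1(1)) auto
  define b :: nat where "b = of_bool (i \<notin> V)"
  have "i \<notin> V \<Longrightarrow> r i = i"
    unfolding r_def using 1(6) id_outside_supp[OF i(2)] by simp
  then have "num_orbits S (Transposition.transpose i j \<circ> r) + 2 * b \<le> num_orbits S r + 1"
    using num_orbits_transpose_comp_fixpoint[OF rp 1(3) i(1) j] i(2) unfolding b_def
    by (cases "i \<in> V") auto
  moreover have "card (set (i # j # cs) - V) = card (set (j # cs) - V) + b"
    using i(2) unfolding b_def by (simp add: insert_Diff_if)
  moreover have "(set (i # j # cs) \<inter> V = {}) = (set (j # cs) \<inter> V = {})"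
    using 1(7) last last_in_set[of "j # cs"] by auto
  moreover have "length (i # j # cs) - 1 = (length (j # cs) - 1) + 1"
    by simp
  ultimately show ?case
    using ih unfolding eq by (simp only: distrib_left)
next
  case ("2_2" v f)
  then show ?case
    by (cases "v \<in> V") (simp_all add: insert_Diff_if)
qed simp

definition cycles_rank :: "'a list list \<Rightarrow> nat" where
  "cycles_rank cs = (\<Sum>c\<leftarrow>cs. length c - 1)"

text \<open>An upper bound for the number of connected components of a family of cycles.\<close>

fun isolated_count :: "'a list list \<Rightarrow> nat" where
  "isolated_count [] = 0"
| "isolated_count (c # cs) = of_bool (set c \<inter> set (concat cs) = {}) + isolated_count cs"

lemma isolated_count_le_length: "isolated_count cs \<le> length cs"
  by (induction cs) auto

lemma isolated_count_less_length:
  assumes "\<forall>c\<in>set cs. distinct c" "\<not> distinct (concat cs)"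
  shows "isolated_count cs < length cs"
  using assms
proof (induction cs)
  case (Cons c cs)
  then show ?case
    using isolated_count_le_length[of cs] by (cases "set c \<inter> set (concat cs) = {}") auto
qed simp

lemma cycles_rank_add_length:
  "\<forall>c\<in>set cs. c \<noteq> [] \<Longrightarrow> cycles_rank cs + length cs = (\<Sum>c\<leftarrow>cs. length c)"
proof (induction cs)
  case (Cons c cs)
  then show ?case
    by (cases c) (auto simp: cycles_rank_def)
qed (simp add: cycles_rank_def)

lemma num_orbits_cycprod_ge:
  assumes "finite S" "set (concat cs) \<subseteq> S"
  shows "card S \<le> num_orbits S (cycprod cs) + cycles_rank cs"
  using assms
proof (induction cs)
  case (Cons c cs)
  have "cycprod cs permutes S"
    using Cons.prems by (intro cycprod_permutes_superset) auto
  then have "num_orbits S (cycprod cs) \<le> num_orbits S (cycle_of_list c \<circ> cycprod cs) + (length c - 1)"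
    using Cons.prems by (intro num_orbits_cycle_comp_ge) auto
  moreover have "card S \<le> num_orbits S (cycprod cs) + cycles_rank cs"
    using Cons by simp
  moreover have "cycles_rank (c # cs) = (length c - 1) + cycles_rank cs"
    by (simp add: cycles_rank_def)
  ultimately show ?case
    unfolding cycprod_Cons by linarith
qed (simp add: num_orbits_id cycles_rank_def)

lemma ex_rotate_last: "x \<in> set c \<Longrightarrow> \<exists>k. last (rotate k c) = x"
proof -
  assume "x \<in> set c"
  then obtain xs ys where "c = xs @ x # ys"
    by (meson split_list)
  then have "rotate (length (xs @ [x])) c = ys @ xs @ [x]"
    using rotate_append[of "xs @ [x]" ys] by simp
  then show ?thesis
    by (metis last_snoc append_assoc)
qed

lemma num_orbits_cycprod_le:
  assumes "finite S" "set (concat cs) \<subseteq> S" "\<forall>c\<in>set cs. distinct c"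
  shows "num_orbits S (cycprod cs) + 2 * card (set (concat cs))
    \<le> card S + cycles_rank cs + 2 * isolated_count cs"
  using assms
proof (induction cs)
  case (Cons c cs)
  let ?V = "set (concat cs)"
  have p: "cycprod cs permutes S"
    using Cons.prems by (intro cycprod_permutes_superset) auto
  have "\<exists>k. set (rotate k c) \<inter> ?V \<noteq> {} \<longrightarrow> last (rotate k c) \<in> ?V"
  proof (cases "set c \<inter> ?V = {}")
    case False
    then obtain x where "x \<in> set c" "x \<in> ?V"
      by blast
    then show ?thesis
      using ex_rotate_last by metis
  qed auto
  then obtain k where k: "set (rotate k c) \<inter> ?V \<noteq> {} \<Longrightarrow> last (rotate k c) \<in> ?V"
    by blast
  have "num_orbits S (cycle_of_list (rotate k c) \<circ> cycprod cs) + 2 * card (set (rotate k c) - ?V)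
      \<le> num_orbits S (cycprod cs) + (length (rotate k c) - 1) + 2 * of_bool (set (rotate k c) \<inter> ?V = {})"
    by (rule num_orbits_cycle_comp_le[OF p Cons.prems(1) _ _ cycprod_fixes k]) (use Cons.prems in auto)
  moreover have "cycle_of_list (rotate k c) = cycle_of_list c"
    using Cons.prems(3) cycle_of_list_rotate_independent by (metis list.set_intros(1))
  ultimately have "num_orbits S (cycprod (c # cs)) + 2 * card (set c - ?V)
      \<le> num_orbits S (cycprod cs) + (length c - 1) + 2 * of_bool (set c \<inter> ?V = {})"
    by simp
  moreover have "card (set (concat (c # cs))) = card ?V + card (set c - ?V)"
  proof -
    have "set (concat (c # cs)) = ?V \<union> (set c - ?V)"
      by auto
    then show ?thesis
      by (simp only:) (rule card_Un_disjoint; auto)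
  qed
  moreover have "num_orbits S (cycprod cs) + 2 * card ?V \<le> card S + cycles_rank cs + 2 * isolated_count cs"
    using Cons by simp
  moreover have "cycles_rank (c # cs) = (length c - 1) + cycles_rank cs"
    by (simp add: cycles_rank_def)
  moreover have "isolated_count (c # cs) = of_bool (set c \<inter> ?V = {}) + isolated_count cs"
    by simp
  ultimately show ?case
    by linarith
qed (simp add: num_orbits_id cycles_rank_def)

lemma set_cycles_eq_nontrivial_orbits:
  assumes "distinct (concat cs)" "\<forall>c\<in>set cs. 2 \<le> length c"
  shows "set ` set cs = {orbit (cycprod cs) x | x. cycprod cs x \<noteq> x}"
proof (intro equalityI subsetI)
  fix X assume "X \<in> set ` set cs"
  then obtain c where c: "c \<in> set cs" "X = set c"
    by auto
  then have "c \<noteq> []"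
    using assms(2) by fastforce
  then obtain x where x: "x \<in> set c"
    by (meson last_in_set)
  have "cycprod cs x = cycle_of_list c x"
    by (rule cycprod_eq_cycle_of_list[OF assms(1) c(1) x])
  also have "\<dots> \<noteq> x"
    using assms c(1) x by (intro cycle_of_list_moves) (auto simp: distinct_concat_iff)
  finally show "X \<in> {orbit (cycprod cs) x | x. cycprod cs x \<noteq> x}"
    using orbit_cycprod[OF assms(1) c(1) x] c(2) by auto
next
  fix X assume "X \<in> {orbit (cycprod cs) x | x. cycprod cs x \<noteq> x}"
  then obtain x where x: "X = orbit (cycprod cs) x" "cycprod cs x \<noteq> x"
    by auto
  then have "x \<in> set (concat cs)"
    using cycprod_fixes by blast
  then obtain c where "c \<in> set cs" "x \<in> set c"
    by auto
  then show "X \<in> set ` set cs"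
    using orbit_cycprod[OF assms(1)] x by auto
qed

lemma cycle_type_unique:
  assumes "distinct (concat cs)" "\<forall>c\<in>set cs. 2 \<le> length c"
    and "distinct (concat ds)" "\<forall>d\<in>set ds. 2 \<le> length d"
    and "cycprod cs = cycprod ds"
  shows "mset (map length cs) = mset (map length ds)"
proof -
  have "\<forall>c\<in>set cs. c \<noteq> []" "\<forall>d\<in>set ds. d \<noteq> []"
    using assms(2,4) by fastforce+
  then have "distinct (map set cs)" "distinct (map set ds)"
    using assms(1,3) by (simp_all add: distinct_map_set)
  moreover have "set (map set cs) = set (map set ds)"
    using set_cycles_eq_nontrivial_orbits[OF assms(1,2)] set_cycles_eq_nontrivial_orbits[OF assms(3,4)]
      assms(5) by simp
  ultimately have "mset (map set cs) = mset (map set ds)"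
    using set_eq_iff_mset_eq_distinct by blast
  then have "mset (map card (map set cs)) = mset (map card (map set ds))"
    by (simp only: mset_map)
  moreover have "map length cs = map card (map set cs)" "map length ds = map card (map set ds)"
    using assms(1,3) by (auto simp: distinct_card distinct_concat_iff)
  ultimately show ?thesis
    by metis
qed

section \<open>Products of the \<open>\<Sigma>\<close> as counts of tuples of cycle lists\<close>

definition cycle_lists :: "nat \<Rightarrow> nat list \<Rightarrow> nat list list set" where
  "cycle_lists n ws = {cs. map length cs = ws \<and> distinct (concat cs) \<and> set (concat cs) \<subseteq> {1..n}}"

definition num_factorizations :: "nat \<Rightarrow> nat list \<Rightarrow> (nat \<Rightarrow> nat) \<Rightarrow> nat" where
  "num_factorizations n ws \<sigma> = card {cs \<in> cycle_lists n ws. cycprod cs = \<sigma>}"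

lemma Sig_eq_num_factorizations:
  "Sig n lam \<sigma> = of_nat (num_factorizations n (sorted_list_of_multiset lam) \<sigma>)"
  unfolding Sig_def num_factorizations_def cycle_lists_def by (simp add: conj_assoc)

lemma finite_cycle_lists: "finite (cycle_lists n ws)"
proof -
  let ?A = "{c :: nat list. set c \<subseteq> {1..n} \<and> length c \<le> n}"
  have "length c \<le> n" if "cs \<in> cycle_lists n ws" "c \<in> set cs" for cs c
  proof -
    have "length c \<le> length (concat cs)"
      using that(2) by (induction cs) auto
    also have "\<dots> = card (set (concat cs))"
      using that(1) distinct_card unfolding cycle_lists_def by fastforce
    also have "\<dots> \<le> n"
      using that(1) card_mono[of "{1..n}"] unfolding cycle_lists_def by fastforce
    finally show ?thesis .
  qed
  then have "cycle_lists n ws \<subseteq> {cs. set cs \<subseteq> ?A \<and> length cs = length ws}"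
    unfolding cycle_lists_def by (fastforce dest: arg_cong[where f = length])
  moreover have "finite {cs. set cs \<subseteq> ?A \<and> length cs = length ws}"
    by (intro finite_lists_length_eq finite_lists_length_le) simp
  ultimately show ?thesis
    by (rule finite_subset)
qed

lemma permute_list_mem_cycle_lists:
  assumes cs: "cs \<in> cycle_lists n ws" and p: "p permutes {..<length cs}"
  shows "permute_list p cs \<in> cycle_lists n (permute_list p ws)"
proof -
  have m: "mset (concat (permute_list p cs)) = mset (concat cs)"
    using p by (rule mset_concat_permute_list)
  have "map length (permute_list p cs) = permute_list p ws"
    using cs permute_list_map[OF p, of length, symmetric] unfolding cycle_lists_def by simp
  moreover have "distinct (concat (permute_list p cs))"
    using cs mset_eq_imp_distinct_iff[OF m] unfolding cycle_lists_def by simp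
  moreover have "set (concat (permute_list p cs)) \<subseteq> {1..n}"
    using cs mset_eq_setD[OF m] unfolding cycle_lists_def by simp
  ultimately show ?thesis
    unfolding cycle_lists_def by simp
qed

lemma num_factorizations_mset_eq:
  assumes "mset ws = mset ws'"
  shows "num_factorizations n ws \<sigma> = num_factorizations n ws' \<sigma>"
proof -
  have le: "num_factorizations n ws' \<sigma> \<le> num_factorizations n ws \<sigma>" if m: "mset ws = mset ws'" for ws ws'
  proof -
    obtain p where p: "p permutes {..<length ws'}" "permute_list p ws' = ws"
      using mset_eq_permutation[OF m] by blast
    let ?F = "\<lambda>ws. {cs \<in> cycle_lists n ws. cycprod cs = \<sigma>}"
    have "permute_list p cs \<in> ?F ws" if cs: "cs \<in> ?F ws'" for cs
    proof -
      have "p permutes {..<length cs}"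
        using p(1) cs unfolding cycle_lists_def by (auto dest: arg_cong[where f = length])
      then show ?thesis
        using cs permute_list_mem_cycle_lists[of cs n ws' p] cycprod_permute_list[of cs p] p(2)
        unfolding cycle_lists_def by simp
    qed
    moreover have "inj_on (permute_list p) (?F ws')"
    proof (rule inj_onI)
      fix cs ds assume "cs \<in> ?F ws'" "ds \<in> ?F ws'" "permute_list p cs = permute_list p ds"
      moreover have "length cs = length ws'"
        using \<open>cs \<in> ?F ws'\<close> unfolding cycle_lists_def by (auto dest: arg_cong[where f = length])
      ultimately show "cs = ds"
        using p(1) list_all2_permute_list_iff[of p cs "(=)" ds] by (simp add: list.rel_eq)
    qed
    ultimately show ?thesis
      unfolding num_factorizations_def using finite_cycle_lists
      by (intro card_inj_on_le) auto
  qed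
  show ?thesis
    using le[OF assms] le[OF assms[symmetric]] by simp
qed

definition cycle_tuples :: "nat \<Rightarrow> nat multiset list \<Rightarrow> nat list list list set" where
  "cycle_tuples n lams =
     {tup. list_all2 (\<lambda>cs lam. cs \<in> cycle_lists n (sorted_list_of_multiset lam)) tup lams}"

lemma cycle_tuples_Nil: "cycle_tuples n [] = {[]}"
  unfolding cycle_tuples_def by auto

lemma cycle_tuples_Cons:
  "cycle_tuples n (lam # lams) =
     (\<lambda>(cs, tup). cs # tup) ` (cycle_lists n (sorted_list_of_multiset lam) \<times> cycle_tuples n lams)"
  unfolding cycle_tuples_def by (auto simp: list_all2_Cons2)

lemma finite_cycle_tuples: "finite (cycle_tuples n lams)"
  by (induction lams) (auto simp: cycle_tuples_Nil cycle_tuples_Cons finite_cycle_lists)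

lemma mem_cycle_tuples_iff:
  "tup \<in> cycle_tuples n lams \<longleftrightarrow>
     map (map length) tup = map sorted_list_of_multiset lams \<and>
     (\<forall>cs\<in>set tup. distinct (concat cs) \<and> set (concat cs) \<subseteq> {1..n})"
  unfolding cycle_tuples_def cycle_lists_def
proof (induction lams arbitrary: tup)
  case (Cons lam lams)
  then show ?case
    by (cases tup) auto
qed auto

lemma cycle_tuples_concat_lengths:
  "tup \<in> cycle_tuples n lams \<Longrightarrow> map length (concat tup) = concat (map sorted_list_of_multiset lams)"
  by (simp add: mem_cycle_tuples_iff map_concat)

lemma cycle_tuples_lengths:
  assumes "tup \<in> cycle_tuples n lams"
  shows "map length tup = map length (map sorted_list_of_multiset lams)"
proof -
  have "map (map length) tup = map sorted_list_of_multiset lams"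
    using assms by (simp add: mem_cycle_tuples_iff)
  then have "map length (map (map length) tup) = map length (map sorted_list_of_multiset lams)"
    by (rule arg_cong)
  then show ?thesis
    by (simp add: comp_def)
qed

lemma cycle_tuples_support:
  "tup \<in> cycle_tuples n lams \<Longrightarrow> set (concat (concat tup)) \<subseteq> {1..n}"
  by (auto simp: mem_cycle_tuples_iff)

lemma cycle_tuples_distinct_cycles:
  "tup \<in> cycle_tuples n lams \<Longrightarrow> \<forall>c\<in>set (concat tup). distinct c"
  by (auto simp: mem_cycle_tuples_iff distinct_concat_iff)

lemma Sig_eq_sum: "Sig n lam \<sigma> =
    (\<Sum>cs\<in>cycle_lists n (sorted_list_of_multiset lam). of_bool (cycprod cs = \<sigma>))"
proof -
  have "{cs \<in> cycle_lists n (sorted_list_of_multiset lam). cycprod cs = \<sigma>}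
      = cycle_lists n (sorted_list_of_multiset lam) \<inter> {cs. cycprod cs = \<sigma>}"
    by blast
  then show ?thesis
    by (simp add: Sig_eq_num_factorizations num_factorizations_def finite_cycle_lists)
qed

lemma comp_eq_iff_eq_inv_comp:
  assumes "bij p"
  shows "p \<circ> r = \<sigma> \<longleftrightarrow> r = inv p \<circ> \<sigma>"
proof
  assume "p \<circ> r = \<sigma>"
  then show "r = inv p \<circ> \<sigma>"
    using bij_is_inj[OF assms] by (metis comp_assoc inv_o_cancel id_comp)
next
  assume "r = inv p \<circ> \<sigma>"
  then show "p \<circ> r = \<sigma>"
    using bij_is_surj[OF assms] by (metis comp_assoc surj_iff id_comp)
qed

lemma gprod_Sig_eq_sum:
  "gprod n (map (Sig n) lams) \<sigma> = (\<Sum>tup\<in>cycle_tuples n lams. of_bool (cycprod (concat tup) = \<sigma>))"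
proof (induction lams arbitrary: \<sigma>)
  case Nil
  then show ?case
    by (auto simp: gprod_def gunit_def cycle_tuples_Nil id_def)
next
  case (Cons lam lams)
  let ?P = "{\<tau>. \<tau> permutes {1..n}}"
  let ?L = "cycle_lists n (sorted_list_of_multiset lam)"
  let ?T = "cycle_tuples n lams"
  let ?G = "gprod n (map (Sig n) lams)"
  have perm: "cycprod cs permutes {1..n}" if "cs \<in> ?L" for cs
    using that cycprod_permutes_superset unfolding cycle_lists_def by blast
  have "gprod n (map (Sig n) (lam # lams)) \<sigma> = (\<Sum>\<tau>\<in>?P. Sig n lam \<tau> * ?G (inv \<tau> \<circ> \<sigma>))"
    by (simp add: gprod_def gmult_def)
  also have "\<dots> = (\<Sum>\<tau>\<in>?P. \<Sum>cs\<in>?L. of_bool (cycprod cs = \<tau>) * ?G (inv \<tau> \<circ> \<sigma>))"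
    by (simp only: Sig_eq_sum sum_distrib_right)
  also have "\<dots> = (\<Sum>cs\<in>?L. \<Sum>\<tau>\<in>?P. of_bool (cycprod cs = \<tau>) * ?G (inv \<tau> \<circ> \<sigma>))"
    by (rule sum.swap)
  also have "\<dots> = (\<Sum>cs\<in>?L. ?G (inv (cycprod cs) \<circ> \<sigma>))"
  proof (rule sum.cong[OF refl])
    fix cs assume "cs \<in> ?L"
    then have "?P \<inter> {\<tau>. cycprod cs = \<tau>} = {cycprod cs}"
      using perm by auto
    then show "(\<Sum>\<tau>\<in>?P. of_bool (cycprod cs = \<tau>) * ?G (inv \<tau> \<circ> \<sigma>)) = ?G (inv (cycprod cs) \<circ> \<sigma>)"
      by (simp add: finite_permutations)
  qed
  also have "\<dots> = (\<Sum>cs\<in>?L. \<Sum>tup\<in>?T. of_bool (cycprod cs \<circ> cycprod (concat tup) = \<sigma>))"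
  proof (rule sum.cong[OF refl])
    fix cs assume "cs \<in> ?L"
    then have "bij (cycprod cs)"
      using perm permutes_bij by blast
    then show "?G (inv (cycprod cs) \<circ> \<sigma>) = (\<Sum>tup\<in>?T. of_bool (cycprod cs \<circ> cycprod (concat tup) = \<sigma>))"
      unfolding Cons.IH by (simp only: comp_eq_iff_eq_inv_comp eq_commute[of "inv (cycprod cs) \<circ> \<sigma>"])
  qed
  also have "\<dots> = (\<Sum>p\<in>?L \<times> ?T. of_bool (cycprod (concat ((\<lambda>(cs, tup). cs # tup) p)) = \<sigma>))"
    by (simp add: sum.cartesian_product cycprod_append split_def)
  also have "\<dots> = (\<Sum>tup\<in>cycle_tuples n (lam # lams). of_bool (cycprod (concat tup) = \<sigma>))"
    unfolding cycle_tuples_Cons by (rule sum.reindex[symmetric, unfolded comp_def]) (auto simp: inj_on_def)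
  finally show ?case .
qed

lemma concat_eq_imp_eq:
  "map length xs = map length ys \<Longrightarrow> concat xs = concat ys \<Longrightarrow> xs = ys"
proof (induction xs arbitrary: ys)
  case (Cons x xs)
  then obtain y ys' where "ys = y # ys'" "length x = length y"
    by (cases ys) auto
  with Cons show ?case
    by (auto simp: append_eq_append_conv)
qed simp

lemma ex_concat_eq:
  "map length cs = concat wss \<Longrightarrow> \<exists>tup. map (map length) tup = wss \<and> concat tup = cs"
proof (induction wss arbitrary: cs)
  case (Cons ws wss)
  let ?k = "length ws"
  have "map length (drop ?k cs) = concat wss"
    using Cons.prems by (simp add: drop_map[symmetric])
  then obtain tup where "map (map length) tup = wss" "concat tup = drop ?k cs"
    using Cons.IH by blast
  moreover have "map length (take ?k cs) = ws"
    using Cons.prems by (simp add: take_map[symmetric])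
  ultimately show ?case
    by (intro exI[of _ "take ?k cs # tup"]) simp
qed simp

lemma mem_cycle_tuplesI:
  assumes "map (map length) tup = map sorted_list_of_multiset lams"
    and "distinct (concat (concat tup))" "set (concat (concat tup)) \<subseteq> {1..n}"
  shows "tup \<in> cycle_tuples n lams"
proof -
  have "concat (concat tup) = concat (map concat tup)"
    by (induction tup) auto
  then have dist: "distinct (concat (map concat tup))"
    using assms(2) by simp
  have "distinct (concat c) \<and> set (concat c) \<subseteq> {1..n}" if "c \<in> set tup" for c
  proof
    have "concat c \<in> set (map concat tup)"
      using that by simp
    then show "distinct (concat c)"
      using dist[unfolded distinct_concat_iff] by blast
    show "set (concat c) \<subseteq> {1..n}"
      using that assms(3) by auto
  qed
  then show ?thesis
    using assms(1) unfolding mem_cycle_tuples_iff by blast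
qed

definition overlapping_tuples :: "nat \<Rightarrow> nat multiset list \<Rightarrow> (nat \<Rightarrow> nat) \<Rightarrow> nat list list list set" where
  "overlapping_tuples n lams \<sigma> =
     {tup \<in> cycle_tuples n lams. \<not> distinct (concat (concat tup)) \<and> cycprod (concat tup) = \<sigma>}"

lemma card_disjoint_tuples:
  "card {tup \<in> cycle_tuples n lams. distinct (concat (concat tup)) \<and> cycprod (concat tup) = \<sigma>}
     = num_factorizations n (concat (map sorted_list_of_multiset lams)) \<sigma>"
  unfolding num_factorizations_def
proof (rule bij_betw_same_card[of concat])
  let ?ws = "concat (map sorted_list_of_multiset lams)"
  let ?D = "{tup \<in> cycle_tuples n lams. distinct (concat (concat tup)) \<and> cycprod (concat tup) = \<sigma>}"
  have "inj_on concat ?D"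
    by (intro inj_onI concat_eq_imp_eq) (auto simp: cycle_tuples_lengths)
  moreover have "concat ` ?D = {cs \<in> cycle_lists n ?ws. cycprod cs = \<sigma>}"
  proof (intro equalityI subsetI)
    fix cs assume "cs \<in> concat ` ?D"
    then obtain tup where tup: "tup \<in> ?D" "cs = concat tup"
      by blast
    then have "tup \<in> cycle_tuples n lams"
      by simp
    then show "cs \<in> {cs \<in> cycle_lists n ?ws. cycprod cs = \<sigma>}"
      using tup cycle_tuples_concat_lengths cycle_tuples_support unfolding cycle_lists_def
      by auto
  next
    fix cs assume cs: "cs \<in> {cs \<in> cycle_lists n ?ws. cycprod cs = \<sigma>}"
    then obtain tup where tup: "map (map length) tup = map sorted_list_of_multiset lams" "concat tup = cs"
      using ex_concat_eq unfolding cycle_lists_def by blast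
    have "distinct (concat (concat tup))" "set (concat (concat tup)) \<subseteq> {1..n}"
      "cycprod (concat tup) = \<sigma>"
      using cs unfolding tup(2)[symmetric] cycle_lists_def by simp_all
    then have "tup \<in> ?D"
      using mem_cycle_tuplesI[OF tup(1)] by simp
    then show "cs \<in> concat ` ?D"
      using tup(2) by blast
  qed
  ultimately show "bij_betw concat ?D {cs \<in> cycle_lists n ?ws. cycprod cs = \<sigma>}"
    by (simp add: bij_betw_def)
qed

lemma gprod_Sig_eq:
  "gprod n (map (Sig n) lams) \<sigma> = Sig n (sum_list lams) \<sigma> + of_nat (card (overlapping_tuples n lams \<sigma>))"
proof -
  let ?T = "{tup \<in> cycle_tuples n lams. cycprod (concat tup) = \<sigma>}"
  let ?D = "{tup \<in> cycle_tuples n lams. distinct (concat (concat tup)) \<and> cycprod (concat tup) = \<sigma>}"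
  have "cycle_tuples n lams \<inter> {tup. cycprod (concat tup) = \<sigma>} = ?T"
    by blast
  then have "gprod n (map (Sig n) lams) \<sigma> = of_nat (card ?T)"
    by (simp add: gprod_Sig_eq_sum finite_cycle_tuples)
  moreover have "?T = ?D \<union> overlapping_tuples n lams \<sigma>" "?D \<inter> overlapping_tuples n lams \<sigma> = {}"
    unfolding overlapping_tuples_def by auto
  moreover have "finite ?D" "finite (overlapping_tuples n lams \<sigma>)"
    using finite_cycle_tuples unfolding overlapping_tuples_def by auto
  ultimately have "gprod n (map (Sig n) lams) \<sigma> = of_nat (card ?D) + of_nat (card (overlapping_tuples n lams \<sigma>))"
    by (simp add: card_Un_disjoint)
  moreover have "mset (concat (map sorted_list_of_multiset lams)) = mset (sorted_list_of_multiset (sum_list lams))"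
    by (induction lams) auto
  then have "card ?D = num_factorizations n (sorted_list_of_multiset (sum_list lams)) \<sigma>"
    unfolding card_disjoint_tuples by (rule num_factorizations_mset_eq)
  ultimately show ?thesis
    by (simp add: Sig_eq_num_factorizations)
qed

section \<open>Conjugation invariance\<close>

lemma card_conjugation_invariant:
  assumes \<pi>: "\<pi> permutes {1..n}"
    and maps: "\<And>\<pi> \<sigma> x. \<pi> permutes {1..n} \<Longrightarrow> x \<in> X \<sigma> \<Longrightarrow> F \<pi> x \<in> X (\<pi> \<circ> \<sigma> \<circ> inv \<pi>)"
    and inverse: "\<And>\<pi> x. \<pi> permutes {1..n} \<Longrightarrow> F (inv \<pi>) (F \<pi> x) = x"
  shows "card (X (\<pi> \<circ> \<sigma> \<circ> inv \<pi>)) = card (X \<sigma>)"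
proof (rule bij_betw_same_card[of "F (inv \<pi>)"], rule bij_betw_byWitness[where f' = "F \<pi>"])
  have \<pi>': "inv \<pi> permutes {1..n}" and inv_inv: "inv (inv \<pi>) = \<pi>"
    using \<pi> by (simp_all add: permutes_inv permutes_inv_inv)
  have "inv \<pi> \<circ> (\<pi> \<circ> \<sigma> \<circ> inv \<pi>) \<circ> inv (inv \<pi>) = \<sigma>"
    using \<pi> by (simp add: inv_inv fun_eq_iff permutes_inverses)
  then show "F (inv \<pi>) ` X (\<pi> \<circ> \<sigma> \<circ> inv \<pi>) \<subseteq> X \<sigma>"
    using maps[OF \<pi>'] by fastforce
  show "F \<pi> ` X \<sigma> \<subseteq> X (\<pi> \<circ> \<sigma> \<circ> inv \<pi>)"
    using maps[OF \<pi>] by blast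
  show "\<forall>x\<in>X (\<pi> \<circ> \<sigma> \<circ> inv \<pi>). F \<pi> (F (inv \<pi>) x) = x"
    using inverse[OF \<pi>'] by (simp add: inv_inv)
  show "\<forall>x\<in>X \<sigma>. F (inv \<pi>) (F \<pi> x) = x"
    using inverse[OF \<pi>] by simp
qed

lemma map_map_inv_permutes: "\<pi> permutes S \<Longrightarrow> map (map (inv \<pi>)) (map (map \<pi>) cs) = cs"
  by (simp add: permutes_inverses(2) map_idI)

lemma map_map_mem_cycle_lists:
  assumes "\<pi> permutes {1..n}" "cs \<in> cycle_lists n ws"
  shows "map (map \<pi>) cs \<in> cycle_lists n ws"
proof -
  have "concat (map (map \<pi>) cs) = map \<pi> (concat cs)"
    by (simp add: map_concat)
  moreover have "inj \<pi>"
    using assms(1) permutes_inj by blast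
  ultimately show ?thesis
    using assms permutes_in_image[OF assms(1)] unfolding cycle_lists_def
    by (auto simp: distinct_map inj_on_def)
qed

lemma num_factorizations_conj:
  assumes "\<pi> permutes {1..n}"
  shows "num_factorizations n ws (\<pi> \<circ> \<sigma> \<circ> inv \<pi>) = num_factorizations n ws \<sigma>"
  unfolding num_factorizations_def
proof (rule card_conjugation_invariant[OF assms, where F = "\<lambda>\<pi>. map (map \<pi>)"])
  fix \<pi> \<sigma> cs assume \<pi>: "\<pi> permutes {1..n}" and cs: "cs \<in> {cs \<in> cycle_lists n ws. cycprod cs = \<sigma>}"
  then have "\<forall>c\<in>set cs. distinct c"
    unfolding cycle_lists_def using distinct_concat_iff by blast
  then have "cycprod (map (map \<pi>) cs) = \<pi> \<circ> \<sigma> \<circ> inv \<pi>"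
    using cycprod_conjugate permutes_bij[OF \<pi>] cs by simp
  then show "map (map \<pi>) cs \<in> {cs \<in> cycle_lists n ws. cycprod cs = \<pi> \<circ> \<sigma> \<circ> inv \<pi>}"
    using map_map_mem_cycle_lists[OF \<pi>] cs by simp
qed (rule map_map_inv_permutes)

lemma card_overlapping_tuples_conj:
  assumes "\<pi> permutes {1..n}"
  shows "card (overlapping_tuples n lams (\<pi> \<circ> \<sigma> \<circ> inv \<pi>)) = card (overlapping_tuples n lams \<sigma>)"
proof (rule card_conjugation_invariant[OF assms, where F = "\<lambda>\<pi>. map (map (map \<pi>))"])
  fix \<pi> \<sigma> tup assume \<pi>: "\<pi> permutes {1..n}" and tup: "tup \<in> overlapping_tuples n lams \<sigma>"
  then have T: "tup \<in> cycle_tuples n lams"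
    unfolding overlapping_tuples_def by simp
  have "map (map (map \<pi>)) tup \<in> cycle_tuples n lams"
    using T unfolding cycle_tuples_def mem_Collect_eq list_all2_map1
    by (rule list_all2_mono) (rule map_map_mem_cycle_lists[OF \<pi>])
  moreover have "concat (concat (map (map (map \<pi>)) tup)) = map \<pi> (concat (concat tup))"
    by (simp add: map_concat)
  moreover have "concat (map (map (map \<pi>)) tup) = map (map \<pi>) (concat tup)"
    by (simp add: map_concat)
  moreover have "inj \<pi>"
    using \<pi> permutes_inj by blast
  ultimately show "map (map (map \<pi>)) tup \<in> overlapping_tuples n lams (\<pi> \<circ> \<sigma> \<circ> inv \<pi>)"
    using tup cycprod_conjugate[OF cycle_tuples_distinct_cycles[OF T] permutes_bij[OF \<pi>]]
    unfolding overlapping_tuples_def by (simp add: distinct_map inj_on_def)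
next
  fix \<pi> tup assume "\<pi> permutes {1..n}"
  then show "map (map (map (inv \<pi>))) (map (map (map \<pi>)) tup) = tup"
    by (simp add: permutes_inverses(2) map_idI)
qed

section \<open>Cycle types and the expansion in the basis \<open>\<Sigma>\<^sub>\<mu>\<close>\<close>

lemma psize_eq_sum_list: "psize \<mu> = sum_list (sorted_list_of_multiset \<mu>)"
  unfolding psize_def by (metis mset_sorted_list_of_multiset sum_mset_sum_list)

lemma plen_eq_length: "plen \<mu> = length (sorted_list_of_multiset \<mu>)"
  unfolding plen_def by (metis mset_sorted_list_of_multiset size_mset)

lemma plen_le_psize: "parts_ge2 \<mu> \<Longrightarrow> plen \<mu> \<le> psize \<mu>"
  unfolding plen_def psize_def parts_ge2_def
  by (induction \<mu>) (auto simp: add_mono)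

lemma finite_partitions: "finite {\<mu>. parts_ge2 \<mu> \<and> psize \<mu> \<le> n}"
proof -
  have "{\<mu>. parts_ge2 \<mu> \<and> psize \<mu> \<le> n} \<subseteq> mset ` {xs. set xs \<subseteq> {0..n} \<and> length xs \<le> n}"
  proof
    fix \<mu> assume \<mu>: "\<mu> \<in> {\<mu>. parts_ge2 \<mu> \<and> psize \<mu> \<le> n}"
    let ?xs = "sorted_list_of_multiset \<mu>"
    have "set ?xs \<subseteq> {0..n}"
      using \<mu> member_le_sum_list[of _ ?xs] by (force simp: psize_eq_sum_list)
    moreover have "plen \<mu> \<le> psize \<mu>"
      using \<mu> plen_le_psize by blast
    then have "length ?xs \<le> n"
      using \<mu> by (simp add: plen_eq_length)
    ultimately show "\<mu> \<in> mset ` {xs. set xs \<subseteq> {0..n} \<and> length xs \<le> n}"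
      by (intro image_eqI[of _ _ ?xs]) auto
  qed
  moreover have "finite {xs. set xs \<subseteq> {0..n::nat} \<and> length xs \<le> n}"
    by (rule finite_lists_length_le) simp
  ultimately show ?thesis
    using finite_subset by blast
qed

lemma ex_cycprod_decomposition:
  assumes "\<sigma> permutes S" "finite S"
  shows "\<exists>cs. distinct (concat cs) \<and> set (concat cs) = S \<and> \<sigma> = cycprod cs"
proof -
  have "\<exists>cs. distinct (concat cs) \<and> set (concat cs) = I \<and> p = cycprod cs"
    if "cycle_decomp I p" for I p
    using that
  proof (induction rule: cycle_decomp.induct)
    case empty
    then show ?case
      by (intro exI[of _ "[]"]) simp
  next
    case (comp I p cs)
    then obtain C where "distinct (concat C)" "set (concat C) = I" "p = cycprod C"
      by blast
    then show ?case
      using comp by (intro exI[of _ "cs # C"]) auto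
  qed
  then show ?thesis
    using cycle_decomposition[OF assms] by blast
qed

lemma num_factorizations_neq_0_iff:
  "num_factorizations n ws \<sigma> \<noteq> 0 \<longleftrightarrow> (\<exists>cs\<in>cycle_lists n ws. cycprod cs = \<sigma>)"
proof -
  have "finite {cs \<in> cycle_lists n ws. cycprod cs = \<sigma>}"
    using finite_cycle_lists by simp
  then show ?thesis
    unfolding num_factorizations_def by auto
qed

lemma ex_cycle_type:
  assumes "\<sigma> permutes {1..n}"
  shows "\<exists>\<mu>. parts_ge2 \<mu> \<and> psize \<mu> \<le> n \<and> num_factorizations n (sorted_list_of_multiset \<mu>) \<sigma> \<noteq> 0"
proof -
  obtain cs where cs: "distinct (concat cs)" "set (concat cs) = {1..n}" "\<sigma> = cycprod cs"
    using ex_cycprod_decomposition[OF assms] by blast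
  define ds where "ds = filter (\<lambda>c. 2 \<le> length c) cs"
  have "distinct (concat ds) \<and> set (concat ds) \<subseteq> set (concat cs)"
    using cs(1) unfolding ds_def by (induction cs) auto
  then have ds: "distinct (concat ds)" "set (concat ds) \<subseteq> {1..n}"
    using cs(2) by auto
  moreover have "cycprod ds = \<sigma>"
    using cs(3) unfolding ds_def by (simp add: cycprod_filter_short)
  ultimately have "num_factorizations n (map length ds) \<sigma> \<noteq> 0"
    unfolding num_factorizations_neq_0_iff cycle_lists_def by blast
  moreover have "psize (mset (map length ds)) \<le> n"
  proof -
    have "psize (mset (map length ds)) = sum_list (map length ds)"
      unfolding psize_def by (rule sum_mset_sum_list)
    also have "\<dots> = card (set (concat ds))"
      using distinct_card[OF ds(1)] by (simp add: length_concat)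
    also have "\<dots> \<le> n"
      using card_mono[OF _ ds(2)] by simp
    finally show ?thesis .
  qed
  moreover have "parts_ge2 (mset (map length ds))"
    unfolding parts_ge2_def ds_def by auto
  moreover have "num_factorizations n (sorted_list_of_multiset (mset (map length ds))) \<sigma>
      = num_factorizations n (map length ds) \<sigma>"
    by (rule num_factorizations_mset_eq) simp
  ultimately show ?thesis
    by (intro exI[of _ "mset (map length ds)"]) simp
qed

lemma cycle_lists_lengths_ge2:
  assumes "cs \<in> cycle_lists n (sorted_list_of_multiset \<mu>)" "parts_ge2 \<mu>"
  shows "\<forall>c\<in>set cs. 2 \<le> length c"
proof
  fix c assume "c \<in> set cs"
  then have "length c \<in> set (map length cs)"
    by simp
  moreover have "set (map length cs) = set_mset \<mu>"
    using assms(1) unfolding cycle_lists_def by (simp only: mem_Collect_eq set_sorted_list_of_multiset)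
  ultimately have "length c \<in># \<mu>"
    by simp
  then show "2 \<le> length c"
    using assms(2) unfolding parts_ge2_def by blast
qed

lemma cycle_type_eq:
  assumes "parts_ge2 \<mu>" "parts_ge2 \<nu>"
    and "num_factorizations n (sorted_list_of_multiset \<mu>) \<sigma> \<noteq> 0"
    and "num_factorizations n (sorted_list_of_multiset \<nu>) \<sigma> \<noteq> 0"
  shows "\<mu> = \<nu>"
proof -
  obtain cs ds where cs: "cs \<in> cycle_lists n (sorted_list_of_multiset \<mu>)" "cycprod cs = \<sigma>"
    and ds: "ds \<in> cycle_lists n (sorted_list_of_multiset \<nu>)" "cycprod ds = \<sigma>"
    using assms(3,4) unfolding num_factorizations_neq_0_iff by blast
  have "mset (map length cs) = mset (map length ds)"
    using cs ds cycle_lists_lengths_ge2[OF cs(1) assms(1)] cycle_lists_lengths_ge2[OF ds(1) assms(2)]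
    unfolding cycle_lists_def by (intro cycle_type_unique) simp_all
  moreover have "mset (map length cs) = \<mu>" "mset (map length ds) = \<nu>"
    using cs(1) ds(1) unfolding cycle_lists_def by (simp_all only: mem_Collect_eq mset_sorted_list_of_multiset)
  ultimately show ?thesis
    by simp
qed

fun std_cycles :: "nat list \<Rightarrow> nat \<Rightarrow> nat list list" where
  "std_cycles [] s = []"
| "std_cycles (k # ks) s = [s..<s + k] # std_cycles ks (s + k)"

lemma map_length_std_cycles: "map length (std_cycles ks s) = ks"
  by (induction ks arbitrary: s) auto

lemma concat_std_cycles: "concat (std_cycles ks s) = [s..<s + sum_list ks]"
proof (induction ks arbitrary: s)
  case (Cons k ks)
  then show ?case
    using upt_add_eq_append[of s "s + k" "sum_list ks"] by (simp add: add.assoc)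
qed simp

definition std_perm :: "nat multiset \<Rightarrow> nat \<Rightarrow> nat" where
  "std_perm \<mu> = cycprod (std_cycles (sorted_list_of_multiset \<mu>) 1)"

lemma concat_std_cycles_psize: "concat (std_cycles (sorted_list_of_multiset \<mu>) 1) = [1..<1 + psize \<mu>]"
  by (simp only: concat_std_cycles psize_eq_sum_list)

lemma std_cycles_mem_cycle_lists:
  "psize \<mu> \<le> n \<Longrightarrow> std_cycles (sorted_list_of_multiset \<mu>) 1 \<in> cycle_lists n (sorted_list_of_multiset \<mu>)"
  unfolding cycle_lists_def mem_Collect_eq map_length_std_cycles concat_std_cycles_psize by auto

lemma num_factorizations_std_perm_neq_0:
  "psize \<mu> \<le> n \<Longrightarrow> num_factorizations n (sorted_list_of_multiset \<mu>) (std_perm \<mu>) \<noteq> 0"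
  unfolding num_factorizations_neq_0_iff std_perm_def using std_cycles_mem_cycle_lists by blast

lemma ex_permutes_map_eq:
  assumes "finite A" "distinct xs" "distinct ys" "length xs = length ys" "set xs \<subseteq> A" "set ys \<subseteq> A"
  shows "\<exists>\<pi>. \<pi> permutes A \<and> map \<pi> xs = ys"
proof -
  obtain xs'' ys'' where "distinct xs''" "set xs'' = A - set xs" "distinct ys''" "set ys'' = A - set ys"
    using assms(1) by (meson finite_Diff finite_distinct_list)
  define xs' where "xs' = xs @ xs''"
  define ys' where "ys' = ys @ ys''"
  have xs': "distinct xs'" "set xs' = A"
    using assms \<open>distinct xs''\<close> \<open>set xs'' = A - set xs\<close> unfolding xs'_def by auto
  have ys': "distinct ys'" "set ys' = A"
    using assms \<open>distinct ys''\<close> \<open>set ys'' = A - set ys\<close> unfolding ys'_def by auto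
  have "length xs' = card A" "length ys' = card A"
    using distinct_card xs' ys' by metis+
  let ?N = "{..<card A}"
  have bx: "bij_betw ((!) xs') ?N A" and "bij_betw ((!) ys') ?N A"
    using xs' ys' \<open>length xs' = card A\<close> \<open>length ys' = card A\<close> by (auto intro: bij_betw_nth)
  then have "bij_betw ((!) ys' \<circ> inv_into ?N ((!) xs')) A A"
    using bij_betw_trans bij_betw_inv_into by blast
  then have "bij_betw (\<lambda>x. if x \<in> A then ys' ! inv_into ?N ((!) xs') x else x) A A"
    by (rule bij_betw_cong[THEN iffD1, rotated]) simp
  then have perm: "(\<lambda>x. if x \<in> A then ys' ! inv_into ?N ((!) xs') x else x) permutes A"
    by (rule bij_imp_permutes) simp
  have "ys' ! inv_into ?N ((!) xs') (xs ! i) = ys ! i" if "i < length xs" for i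
  proof -
    have "xs ! i = xs' ! i" "ys ! i = ys' ! i" "i \<in> ?N"
      using that assms(4) \<open>length xs' = card A\<close> unfolding xs'_def ys'_def by (auto simp: nth_append)
    then show ?thesis
      using bx by (simp add: bij_betw_def inv_into_f_f)
  qed
  moreover have "xs ! i \<in> A" if "i < length xs" for i
    using that assms(5) nth_mem by blast
  ultimately have "map (\<lambda>x. if x \<in> A then ys' ! inv_into ?N ((!) xs') x else x) xs = ys"
    using assms(4) by (intro nth_equalityI) auto
  then show ?thesis
    using perm by blast
qed

lemma cycprod_conj_std_perm:
  assumes "cs \<in> cycle_lists n (sorted_list_of_multiset \<mu>)" "psize \<mu> \<le> n"
  shows "\<exists>\<pi>. \<pi> permutes {1..n} \<and> cycprod cs = \<pi> \<circ> std_perm \<mu> \<circ> inv \<pi>"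
proof -
  let ?K = "std_cycles (sorted_list_of_multiset \<mu>) 1"
  have K: "?K \<in> cycle_lists n (sorted_list_of_multiset \<mu>)"
    by (rule std_cycles_mem_cycle_lists[OF assms(2)])
  have "length (concat ?K) = length (concat cs)"
    using assms(1) K unfolding cycle_lists_def by (simp add: length_concat)
  then obtain \<pi> where \<pi>: "\<pi> permutes {1..n}" "map \<pi> (concat ?K) = concat cs"
    using ex_permutes_map_eq[of "{1..n}" "concat ?K" "concat cs"] assms(1) K
    unfolding cycle_lists_def by auto
  have "map (map \<pi>) ?K = cs"
    using assms(1) K \<pi>(2) unfolding cycle_lists_def
    by (intro concat_eq_imp_eq) (simp_all add: comp_def map_concat)
  moreover have "\<forall>c\<in>set ?K. distinct c"
    using K unfolding cycle_lists_def using distinct_concat_iff by blast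
  ultimately show ?thesis
    using cycprod_conjugate[of ?K \<pi>] permutes_bij[OF \<pi>(1)] \<pi>(1) unfolding std_perm_def by auto
qed

text \<open>The number of overlapping tuples with product \<open>\<sigma>\<close> and the value \<open>\<Sigma>\<^sub>\<mu>(\<sigma>)\<close> are both
  class functions; their ratio is read off at the representative \<open>std_perm \<mu>\<close>.\<close>

definition remainder_coeff :: "nat multiset list \<Rightarrow> nat multiset \<Rightarrow> nat \<Rightarrow> complex" where
  "remainder_coeff lams \<mu> n =
     (if parts_ge2 \<mu> \<and> psize \<mu> \<le> n
      then of_nat (card (overlapping_tuples n lams (std_perm \<mu>)))
           / of_nat (num_factorizations n (sorted_list_of_multiset \<mu>) (std_perm \<mu>))
      else 0)"

lemma remainder_coeff_mult_Sig:
  assumes "parts_ge2 \<mu>" "psize \<mu> \<le> n" "num_factorizations n (sorted_list_of_multiset \<mu>) \<sigma> \<noteq> 0"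
  shows "remainder_coeff lams \<mu> n * Sig n \<mu> \<sigma> = of_nat (card (overlapping_tuples n lams \<sigma>))"
proof -
  obtain cs where "cs \<in> cycle_lists n (sorted_list_of_multiset \<mu>)" "cycprod cs = \<sigma>"
    using assms(3) unfolding num_factorizations_neq_0_iff by blast
  then obtain \<pi> where \<pi>: "\<pi> permutes {1..n}" "\<sigma> = \<pi> \<circ> std_perm \<mu> \<circ> inv \<pi>"
    using cycprod_conj_std_perm assms(2) by fastforce
  have "num_factorizations n (sorted_list_of_multiset \<mu>) (std_perm \<mu>) \<noteq> 0"
    using num_factorizations_std_perm_neq_0 assms(2) by simp
  then show ?thesis
    using assms(1,2) unfolding remainder_coeff_def Sig_eq_num_factorizations \<pi>(2)
    by (simp add: num_factorizations_conj[OF \<pi>(1)] card_overlapping_tuples_conj[OF \<pi>(1)])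
qed

lemma card_overlapping_tuples_expansion:
  "of_nat (card (overlapping_tuples n lams \<sigma>))
     = (\<Sum>\<mu>\<in>{\<mu>. parts_ge2 \<mu> \<and> psize \<mu> \<le> n}. remainder_coeff lams \<mu> n * Sig n \<mu> \<sigma>)"
proof (cases "\<exists>\<mu>0\<in>{\<mu>. parts_ge2 \<mu> \<and> psize \<mu> \<le> n}. num_factorizations n (sorted_list_of_multiset \<mu>0) \<sigma> \<noteq> 0")
  case True
  let ?M = "{\<mu>. parts_ge2 \<mu> \<and> psize \<mu> \<le> n}"
  from True obtain \<mu>0 where \<mu>0: "\<mu>0 \<in> ?M" "num_factorizations n (sorted_list_of_multiset \<mu>0) \<sigma> \<noteq> 0"
    by blast
  have "Sig n \<mu> \<sigma> = 0" if "\<mu> \<in> ?M - {\<mu>0}" for \<mu>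
    using cycle_type_eq[of \<mu> \<mu>0 n \<sigma>] that \<mu>0 by (auto simp: Sig_eq_num_factorizations)
  then have "(\<Sum>\<mu>\<in>?M. remainder_coeff lams \<mu> n * Sig n \<mu> \<sigma>) = remainder_coeff lams \<mu>0 n * Sig n \<mu>0 \<sigma>"
    using \<mu>0(1) finite_partitions by (simp add: sum.remove)
  then show ?thesis
    using remainder_coeff_mult_Sig \<mu>0 by simp
next
  case False
  have "overlapping_tuples n lams \<sigma> = {}"
  proof (rule ccontr)
    assume "overlapping_tuples n lams \<sigma> \<noteq> {}"
    then obtain tup where "tup \<in> cycle_tuples n lams" "cycprod (concat tup) = \<sigma>"
      unfolding overlapping_tuples_def by blast
    then have "\<sigma> permutes {1..n}"
      using cycprod_permutes_superset[OF cycle_tuples_support] by metis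
    then show False
      using ex_cycle_type False by blast
  qed
  then show ?thesis
    using False by (simp add: Sig_eq_num_factorizations)
qed

section \<open>Growth of the coefficients\<close>

lemma card_lists_few_new_letters:
  assumes "1 \<le> n"
  shows "card {w :: nat list. length w = P \<and> set w \<subseteq> {1..n} \<and> card (set w - {1..m}) \<le> E}
    \<le> (m + E) ^ P * ((E + 1) * n ^ E)"
proof -
  let ?W = "{w :: nat list. length w = P \<and> set w \<subseteq> {1..n} \<and> card (set w - {1..m}) \<le> E}"
  let ?V = "{v :: nat list. set v \<subseteq> {1..n} \<and> length v \<le> E}"
  let ?L = "\<lambda>v. {w :: nat list. set w \<subseteq> {1..m} \<union> set v \<and> length w = P}"
  have "?W \<subseteq> (\<Union>v\<in>?V. ?L v)"
  proof
    fix w assume w: "w \<in> ?W"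
    let ?v = "sorted_list_of_set (set w - {1..m})"
    have "?v \<in> ?V" "w \<in> ?L ?v"
      using w by auto
    then show "w \<in> (\<Union>v\<in>?V. ?L v)"
      by blast
  qed
  then have "card ?W \<le> card (\<Union>v\<in>?V. ?L v)"
    by (intro card_mono) (auto intro!: finite_lists_length_le finite_lists_length_eq)
  also have "\<dots> \<le> (\<Sum>v\<in>?V. card (?L v))"
    by (rule card_UN_le) (simp add: finite_lists_length_le)
  also have "\<dots> \<le> (\<Sum>v\<in>?V. (m + E) ^ P)"
  proof (rule sum_mono)
    fix v assume "v \<in> ?V"
    then have "card ({1..m} \<union> set v) \<le> m + E"
      using card_Un_le[of "{1..m}" "set v"] card_length[of v] by simp
    then show "card (?L v) \<le> (m + E) ^ P"
      by (simp add: card_lists_length_eq power_mono)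
  qed
  also have "\<dots> = card ?V * (m + E) ^ P"
    by simp
  also have "card ?V \<le> (E + 1) * n ^ E"
  proof -
    have "card ?V = (\<Sum>i\<le>E. n ^ i)"
      by (simp add: card_lists_length_le)
    also have "\<dots> \<le> (\<Sum>i\<le>E. n ^ E)"
      using assms by (intro sum_mono power_increasing) auto
    finally show ?thesis
      by simp
  qed
  finally show ?thesis
    by (simp add: mult.commute mult_right_mono)
qed

lemma sum_list_concat_sorted: "sum_list (concat (map sorted_list_of_multiset lams)) = (\<Sum>lam\<leftarrow>lams. psize lam)"
  by (induction lams) (simp_all add: psize_eq_sum_list)

lemma length_concat_sorted: "length (concat (map sorted_list_of_multiset lams)) = (\<Sum>lam\<leftarrow>lams. plen lam)"
  by (induction lams) (simp_all add: plen_eq_length)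

lemma std_perm_moves:
  assumes "parts_ge2 \<mu>" "x \<in> {1..psize \<mu>}"
  shows "std_perm \<mu> x \<noteq> x"
proof -
  let ?K = "std_cycles (sorted_list_of_multiset \<mu>) 1"
  have dK: "distinct (concat ?K)" and "x \<in> set (concat ?K)"
    using assms(2) unfolding concat_std_cycles_psize by auto
  then obtain c where c: "c \<in> set ?K" "x \<in> set c"
    by auto
  have "2 \<le> length c"
    using cycle_lists_lengths_ge2[OF std_cycles_mem_cycle_lists[OF order_refl] assms(1)] c(1) by blast
  moreover have "distinct c"
    using dK c(1) distinct_concat_iff by blast
  ultimately show ?thesis
    using cycprod_eq_cycle_of_list[OF dK c] cycle_of_list_moves c(2) unfolding std_perm_def by simp
qed

lemma num_orbits_std_perm:
  assumes "parts_ge2 \<mu>" "{1..psize \<mu>} \<subseteq> U" "finite U"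
  shows "num_orbits U (std_perm \<mu>) = plen \<mu> + (card U - psize \<mu>)"
proof -
  let ?K = "std_cycles (sorted_list_of_multiset \<mu>) 1"
  have K: "?K \<in> cycle_lists (psize \<mu>) (sorted_list_of_multiset \<mu>)"
    by (rule std_cycles_mem_cycle_lists) simp
  have set_K: "set (concat ?K) = {1..psize \<mu>}"
    unfolding concat_std_cycles_psize by auto
  have "num_orbits U (cycprod ?K) = length ?K + card (U - set (concat ?K))"
  proof (rule num_orbits_cycprod_disjoint)
    show "distinct (concat ?K)"
      using K unfolding cycle_lists_def by simp
    show "\<forall>c\<in>set ?K. c \<noteq> []"
      using cycle_lists_lengths_ge2[OF K assms(1)] by fastforce
  qed (use set_K assms in auto)
  moreover have "length ?K = plen \<mu>"
    using map_length_std_cycles[of "sorted_list_of_multiset \<mu>" 1] unfolding plen_eq_length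
    by (metis length_map)
  moreover have "card (U - {1..psize \<mu>}) = card U - psize \<mu>"
    using card_Diff_subset[OF _ assms(2)] by simp
  ultimately show ?thesis
    unfolding std_perm_def set_K by simp
qed

lemma length_concat_cycle_tuples:
  "tup \<in> cycle_tuples n lams \<Longrightarrow> length (concat tup) = (\<Sum>lam\<leftarrow>lams. plen lam)"
  using cycle_tuples_concat_lengths by (metis length_map length_concat_sorted)

lemma cycles_rank_concat_cycle_tuples:
  assumes lams: "\<forall>lam\<in>set lams. parts_ge2 lam" and T: "tup \<in> cycle_tuples n lams"
  shows "cycles_rank (concat tup) + (\<Sum>lam\<leftarrow>lams. plen lam) = (\<Sum>lam\<leftarrow>lams. psize lam)"
proof -
  have lengths: "map length (concat tup) = concat (map sorted_list_of_multiset lams)"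
    by (rule cycle_tuples_concat_lengths[OF T])
  have "\<forall>c\<in>set (concat tup). c \<noteq> []"
  proof
    fix c assume "c \<in> set (concat tup)"
    then have "length c \<in> set (concat (map sorted_list_of_multiset lams))"
      unfolding lengths[symmetric] by simp
    then show "c \<noteq> []"
      using lams unfolding parts_ge2_def by fastforce
  qed
  moreover have "(\<Sum>c\<leftarrow>concat tup. length c) = (\<Sum>lam\<leftarrow>lams. psize lam)"
    using lengths by (simp only: sum_list_concat_sorted)
  ultimately show ?thesis
    using cycles_rank_add_length[of "concat tup"] length_concat_cycle_tuples[OF T] by simp
qed

lemma overlapping_tuples_std_perm_bounds:
  assumes lams: "\<forall>lam\<in>set lams. parts_ge2 lam" and \<mu>: "parts_ge2 \<mu>"
    and tup: "tup \<in> overlapping_tuples n lams (std_perm \<mu>)"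
  defines "U \<equiv> set (concat (concat tup))"
  shows "{1..psize \<mu>} \<subseteq> U"
    and "psize \<mu> + (\<Sum>lam\<leftarrow>lams. plen lam) \<le> plen \<mu> + (\<Sum>lam\<leftarrow>lams. psize lam)"
    and "plen \<mu> + 2 * card U + 2 \<le> (\<Sum>lam\<leftarrow>lams. psize lam) + (\<Sum>lam\<leftarrow>lams. plen lam) + psize \<mu>"
proof -
  let ?cs = "concat tup"
  have T: "tup \<in> cycle_tuples n lams" and nd: "\<not> distinct (concat ?cs)"
    and prod: "cycprod ?cs = std_perm \<mu>"
    using tup unfolding overlapping_tuples_def by auto
  show sub: "{1..psize \<mu>} \<subseteq> U"
  proof
    fix x assume "x \<in> {1..psize \<mu>}"
    then have "cycprod ?cs x \<noteq> x"
      using std_perm_moves[OF \<mu>] prod by simp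
    then show "x \<in> U"
      unfolding U_def using cycprod_fixes by blast
  qed
  have finU: "finite U"
    unfolding U_def by simp
  then have mU: "psize \<mu> \<le> card U"
    using card_mono[OF finU sub] by simp
  have orbits: "num_orbits U (cycprod ?cs) = plen \<mu> + (card U - psize \<mu>)"
    unfolding prod by (rule num_orbits_std_perm[OF \<mu> sub finU])
  note len = length_concat_cycle_tuples[OF T]
  note rank = cycles_rank_concat_cycle_tuples[OF lams T]
  have "card U \<le> num_orbits U (cycprod ?cs) + cycles_rank ?cs"
    unfolding U_def by (rule num_orbits_cycprod_ge) auto
  then show "psize \<mu> + (\<Sum>lam\<leftarrow>lams. plen lam) \<le> plen \<mu> + (\<Sum>lam\<leftarrow>lams. psize lam)"
    using orbits rank mU by linarith
  have "num_orbits U (cycprod ?cs) + 2 * card U \<le> card U + cycles_rank ?cs + 2 * isolated_count ?cs"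
    unfolding U_def using cycle_tuples_distinct_cycles[OF T] by (intro num_orbits_cycprod_le) auto
  moreover have "isolated_count ?cs < (\<Sum>lam\<leftarrow>lams. plen lam)"
    using isolated_count_less_length[OF cycle_tuples_distinct_cycles[OF T] nd] len by simp
  ultimately show "plen \<mu> + 2 * card U + 2 \<le> (\<Sum>lam\<leftarrow>lams. psize lam) + (\<Sum>lam\<leftarrow>lams. plen lam) + psize \<mu>"
    using orbits rank mU by linarith
qed

lemma inj_on_concat_concat_cycle_tuples: "inj_on (\<lambda>tup. concat (concat tup)) (cycle_tuples n lams)"
proof (rule inj_onI)
  fix a b assume a: "a \<in> cycle_tuples n lams" and b: "b \<in> cycle_tuples n lams"
    and eq: "concat (concat a) = concat (concat b)"
  have "concat a = concat b"
    using cycle_tuples_concat_lengths[OF a] cycle_tuples_concat_lengths[OF b] eq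
    by (intro concat_eq_imp_eq) simp_all
  then show "a = b"
    using cycle_tuples_lengths[OF a] cycle_tuples_lengths[OF b] by (intro concat_eq_imp_eq) simp_all
qed

lemma card_overlapping_tuples_std_perm_le:
  assumes lams: "\<forall>lam\<in>set lams. parts_ge2 lam" and \<mu>: "parts_ge2 \<mu>" and "1 \<le> n"
  defines "P \<equiv> \<Sum>lam\<leftarrow>lams. psize lam"
    and "E \<equiv> ((\<Sum>lam\<leftarrow>lams. psize lam) + (\<Sum>lam\<leftarrow>lams. plen lam) + pl \<mu> - 2 - 2 * psize \<mu>) div 2"
  shows "card (overlapping_tuples n lams (std_perm \<mu>)) \<le> (psize \<mu> + E) ^ P * ((E + 1) * n ^ E)"
proof -
  let ?W = "{w :: nat list. length w = P \<and> set w \<subseteq> {1..n} \<and> card (set w - {1..psize \<mu>}) \<le> E}"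
  have "(\<lambda>tup. concat (concat tup)) ` overlapping_tuples n lams (std_perm \<mu>) \<subseteq> ?W"
  proof
    fix w assume "w \<in> (\<lambda>tup. concat (concat tup)) ` overlapping_tuples n lams (std_perm \<mu>)"
    then obtain tup where tup: "tup \<in> overlapping_tuples n lams (std_perm \<mu>)" "w = concat (concat tup)"
      by blast
    then have T: "tup \<in> cycle_tuples n lams"
      unfolding overlapping_tuples_def by simp
    note bounds = overlapping_tuples_std_perm_bounds[OF lams \<mu> tup(1)]
    have "length w = P"
      using cycle_tuples_concat_lengths[OF T] unfolding tup(2) P_def
      by (simp add: length_concat sum_list_concat_sorted)
    moreover have "set w \<subseteq> {1..n}"
      using cycle_tuples_support[OF T] tup(2) by simp
    moreover have "card (set w - {1..psize \<mu>}) = card (set w) - psize \<mu>"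
      "psize \<mu> \<le> card (set w)"
      using bounds(1) card_mono[OF _ bounds(1)] unfolding tup(2) by (simp_all add: card_Diff_subset)
    then have "card (set w - {1..psize \<mu>}) \<le> E"
      using bounds(3) plen_le_psize[OF \<mu>] unfolding tup(2) E_def P_def pl_def by simp
    ultimately show "w \<in> ?W"
      by simp
  qed
  then have "card (overlapping_tuples n lams (std_perm \<mu>)) \<le> card ?W"
    using inj_on_concat_concat_cycle_tuples
    by (intro card_inj_on_le[OF _ _ finite_subset[of _ "{w. set w \<subseteq> {1..n} \<and> length w = P}"]])
      (auto simp: overlapping_tuples_def inj_on_def finite_lists_length_eq)
  also have "\<dots> \<le> (psize \<mu> + E) ^ P * ((E + 1) * n ^ E)"
    by (rule card_lists_few_new_letters[OF assms(3)])
  finally show ?thesis .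
qed

lemma norm_remainder_coeff_le:
  "norm (remainder_coeff lams \<mu> n) \<le> real (card (overlapping_tuples n lams (std_perm \<mu>)))"
proof (cases "parts_ge2 \<mu> \<and> psize \<mu> \<le> n")
  case True
  let ?a = "card (overlapping_tuples n lams (std_perm \<mu>))"
  let ?b = "num_factorizations n (sorted_list_of_multiset \<mu>) (std_perm \<mu>)"
  have "1 \<le> real ?b"
    using True num_factorizations_std_perm_neq_0 by (simp add: Suc_leI)
  have "norm (remainder_coeff lams \<mu> n) = real ?a / real ?b"
    using True unfolding remainder_coeff_def by (simp add: norm_divide)
  also have "\<dots> \<le> real ?a / 1"
    using \<open>1 \<le> real ?b\<close> by (intro divide_left_mono) auto
  finally show ?thesis
    by simp
qed (auto simp: remainder_coeff_def)

lemma overlapping_tuples_std_perm_nonempty: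
  assumes lams: "\<forall>lam\<in>set lams. parts_ge2 lam" and \<mu>: "parts_ge2 \<mu>"
    and "overlapping_tuples n lams (std_perm \<mu>) \<noteq> {}"
  shows "psize \<mu> + (\<Sum>lam\<leftarrow>lams. plen lam) \<le> plen \<mu> + (\<Sum>lam\<leftarrow>lams. psize lam)"
    and "plen \<mu> + psize \<mu> + 2 \<le> (\<Sum>lam\<leftarrow>lams. psize lam) + (\<Sum>lam\<leftarrow>lams. plen lam)"
proof -
  obtain tup where tup: "tup \<in> overlapping_tuples n lams (std_perm \<mu>)"
    using assms(3) by blast
  note bounds = overlapping_tuples_std_perm_bounds[OF lams \<mu> tup]
  have "psize \<mu> \<le> card (set (concat (concat tup)))"
    using card_mono[OF _ bounds(1)] by simp
  then show "plen \<mu> + psize \<mu> + 2 \<le> (\<Sum>lam\<leftarrow>lams. psize lam) + (\<Sum>lam\<leftarrow>lams. plen lam)"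
    using bounds(3) by linarith
  show "psize \<mu> + (\<Sum>lam\<leftarrow>lams. plen lam) \<le> plen \<mu> + (\<Sum>lam\<leftarrow>lams. psize lam)"
    by (rule bounds(2))
qed

lemma norm_remainder_coeff_le_powr:
  assumes lams: "\<forall>lam\<in>set lams. parts_ge2 lam" and \<mu>: "parts_ge2 \<mu>" and n: "1 \<le> n"
  defines "P \<equiv> \<Sum>lam\<leftarrow>lams. psize lam"
    and "E \<equiv> ((\<Sum>lam\<leftarrow>lams. psize lam) + (\<Sum>lam\<leftarrow>lams. plen lam) + pl \<mu> - 2 - 2 * psize \<mu>) div 2"
  assumes "real E \<le> \<beta>"
  shows "norm (remainder_coeff lams \<mu> n) \<le> real ((psize \<mu> + E) ^ P) * real (E + 1) * real n powr \<beta>"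
proof -
  have "norm (remainder_coeff lams \<mu> n) \<le> real ((psize \<mu> + E) ^ P * ((E + 1) * n ^ E))"
    using norm_remainder_coeff_le[of lams \<mu> n] card_overlapping_tuples_std_perm_le[OF lams \<mu> n]
    unfolding P_def E_def by (simp only: of_nat_le_iff order_trans)
  also have "\<dots> = real ((psize \<mu> + E) ^ P) * real (E + 1) * real n ^ E"
    by (simp only: of_nat_mult of_nat_power mult.assoc)
  also have "real n ^ E = real n powr real E"
    using n by (simp add: powr_realpow)
  also have "\<dots> \<le> real n powr \<beta>"
    using n assms(6) by (intro powr_mono) auto
  finally show ?thesis
    by (simp add: mult_left_mono)
qed

lemma remainder_coeff_bigo:
  assumes lams: "\<forall>lam\<in>set lams. parts_ge2 lam" and \<mu>: "parts_ge2 \<mu>"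
  shows "(\<lambda>n. norm (remainder_coeff lams \<mu> n)) \<in>
    O(\<lambda>n. real n powr ((real (pl \<mu>) + real (\<Sum>lam\<leftarrow>lams. psize lam) + real (\<Sum>lam\<leftarrow>lams. plen lam)) / 2
                         - real (psize \<mu>) - 1))"
    (is "_ \<in> O(\<lambda>n. real n powr ?\<beta>)")
proof -
  define P where "P = (\<Sum>lam\<leftarrow>lams. psize lam)"
  define N where "N = (\<Sum>lam\<leftarrow>lams. plen lam)"
  define E where "E = (P + N + pl \<mu> - 2 - 2 * psize \<mu>) div 2"
  show ?thesis
  proof (cases "P + N + pl \<mu> < 2 + 2 * psize \<mu>")
    case True
    then have "overlapping_tuples n lams (std_perm \<mu>) = {}" for n
      using overlapping_tuples_std_perm_nonempty(2)[OF lams \<mu>] plen_le_psize[OF \<mu>]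
      unfolding P_def N_def pl_def by fastforce
    then have "remainder_coeff lams \<mu> n = 0" for n
      using norm_remainder_coeff_le[of lams \<mu> n] by simp
    then show ?thesis
      by simp
  next
    case False
    have "2 * E \<le> P + N + pl \<mu> - 2 - 2 * psize \<mu>"
      unfolding E_def by presburger
    then have "real (2 * E + 2 + 2 * psize \<mu>) \<le> real (P + N + pl \<mu>)"
      using False by (simp only: of_nat_le_iff)
    then have "real E \<le> ?\<beta>"
      unfolding P_def N_def by (simp add: field_simps)
    then have "norm (norm (remainder_coeff lams \<mu> n))
        \<le> real ((psize \<mu> + E) ^ P) * real (E + 1) * norm (real n powr ?\<beta>)" if "1 \<le> n" for n
      using norm_remainder_coeff_le_powr[OF lams \<mu> that] unfolding E_def P_def N_def by simp
    then show ?thesis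
      by (intro bigoI eventually_mono[OF eventually_ge_at_top[of 1]])
  qed
qed

lemma remainder_coeff_eq_0:
  assumes lams: "\<forall>lam\<in>set lams. parts_ge2 lam" and \<mu>: "parts_ge2 \<mu>"
    and "pl \<mu> > (\<Sum>lam\<leftarrow>lams. pl lam) \<or>
      (pl \<mu> = (\<Sum>lam\<leftarrow>lams. pl lam) \<and> plen \<mu> \<ge> (\<Sum>lam\<leftarrow>lams. plen lam))"
  shows "remainder_coeff lams \<mu> n = 0"
proof -
  have "overlapping_tuples n lams (std_perm \<mu>) = {}"
  proof (rule ccontr)
    assume nonempty: "overlapping_tuples n lams (std_perm \<mu>) \<noteq> {}"
    have "(\<Sum>lam\<leftarrow>lams. pl lam + plen lam) = (\<Sum>lam\<leftarrow>lams. psize lam)"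
      using lams by (intro arg_cong[of _ _ sum_list] map_cong) (auto simp: pl_def plen_le_psize)
    then have "(\<Sum>lam\<leftarrow>lams. pl lam) + (\<Sum>lam\<leftarrow>lams. plen lam) = (\<Sum>lam\<leftarrow>lams. psize lam)"
      by (simp add: sum_list_addf)
    then show False
      using overlapping_tuples_std_perm_nonempty[OF lams \<mu> nonempty] assms(3) plen_le_psize[OF \<mu>]
      unfolding pl_def by linarith
  qed
  then show ?thesis
    using norm_remainder_coeff_le[of lams \<mu> n] by simp
qed

theorem mainTheorem6:
  fixes lams :: "nat multiset list"
  assumes "length lams \<ge> 1"
    and "\<forall>lam \<in> set lams. parts_ge2 lam"
  shows "\<exists>rc :: nat multiset \<Rightarrow> nat \<Rightarrow> complex.
     (\<forall>n. gprod n (map (Sig n) lams) =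
          (\<lambda>\<sigma>. Sig n (sum_list lams) \<sigma>
              + (\<Sum>\<mu> \<in> {\<mu>. parts_ge2 \<mu> \<and> psize \<mu> \<le> n}. rc \<mu> n * Sig n \<mu> \<sigma>)))
   \<and> (\<forall>\<mu>. parts_ge2 \<mu> \<longrightarrow>
        (\<lambda>n. norm (rc \<mu> n)) \<in>
          O(\<lambda>n. real n powr ((real (pl \<mu>) + real (\<Sum>lam\<leftarrow>lams. psize lam)
                               + real (\<Sum>lam\<leftarrow>lams. plen lam)) / 2
                              - real (psize \<mu>) - 1)))
   \<and> (\<forall>\<mu> n. parts_ge2 \<mu> \<and>
        (pl \<mu> > (\<Sum>lam\<leftarrow>lams. pl lam) \<or>
         (pl \<mu> = (\<Sum>lam\<leftarrow>lams. pl lam) \<and> plen \<mu> \<ge> (\<Sum>lam\<leftarrow>lams. plen lam)))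
        \<longrightarrow> rc \<mu> n = 0)"
  using assms(2)
  by (intro exI[of _ "remainder_coeff lams"] conjI allI impI)
    (auto simp: fun_eq_iff gprod_Sig_eq card_overlapping_tuples_expansion remainder_coeff_bigo
      remainder_coeff_eq_0)

end
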